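(* Let $X\in\mathbb{R}^{n\times D}$ and $Y\in\mathbb{R}^{n\times m}$ with $D>n\geq r:=\mathrm{rank}(X)$, and let $h$ be a positive integer with $h\geq\min\{m,D\}$. Write the compact SVD of $X$ as $X=W\begin{bmatrix}\Sigma_x^{1/2} & 0\end{bmatrix}\begin{bmatrix}\Phi_1^T\\ \Phi_2^T\end{bmatrix}$, where $W\in\mathbb{R}^{n\times r}$ has orthonormal columns, $\Sigma_x\in\mathbb{R}^{r\times r}$ is diagonal with positive diagonal entries, $\Phi_1\in\mathbb{R}^{D\times r}$, $\Phi_2\in\mathbb{R}^{D\times(D-r)}$, and $[\Phi_1\ \Phi_2]$ is an orthogonal matrix. For $V\in\mathbb{R}^{m\times h}$ and $U_1\in\mathbb{R}^{r\times h}$ define the error $E(V,U_1)=W^TY-\Sigma_x^{1/2}U_1V^T$. Let $(V(t),U_1(t))$, $t\ge 0$, be the solution of $$\dot V=E^T\Sigma_x^{1/2}U_1,\qquad \dot U_1=\Sigma_x^{1/2}EV,$$ with $E=E(V(t),U_1(t))$, starting from some $(V(0),U_1(0))$ (together with $U_2(t)\equiv U_2(0)\in\mathbb{R}^{(D-r)\times h}$; this is exactly the gradient flow of $\mathcal{L}(V,U)=\frac12\|Y-XUV^T\|_F^2$ written in the coordinates $U=\Phi_1U_1+\Phi_2U_2$). Let $\mathcal{L}(t)=\frac12\|Y-XU(t)V(t)^T\|_F^2$ with $U(t)=\Phi_1U_1(t)+\Phi_2U_2(t)$, and $\mathcal{L}^*=\frac12\|(I-WW^T)Y\|_F^2$.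 Let $\Lambda(0)=U_1(0)^TU_1(0)-V(0)^TV(0)\in\mathbb{R}^{h\times h}$ and $$c:=[\lambda_r(\Lambda(0))]_++[\lambda_m(-\Lambda(0))]_+,$$ where $[a]_+=\max\{a,0\}$, and $\lambda_r(\Lambda(0))$ (resp. $\lambda_m(-\Lambda(0))$) is taken to be $0$ if $h<r$ (resp. $h<m$). Then $$\mathcal{L}(t)-\mathcal{L}^*\leq \exp\left(-2\lambda_r(\Sigma_x)\,c\,t\right)(\mathcal{L}(0)-\mathcal{L}^* )\quad\text{for all } t>0.$$ Moreover, if $h\geq m+r$, then $c=\lambda_r(\Lambda(0))+\lambda_m(-\Lambda(0))$. Additionally, if $c>0$, then $(V(t),U_1(t))$ converges as $t\to\infty$ to an equilibrium point $(V(\infty),U_1(\infty))$ such that $E(V(\infty),U_1(\infty))=0$.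
   Context: $\lambda_i(A)$ denotes the $i$-th largest eigenvalue of a symmetric matrix $A$. The matrix $\Lambda=U_1^TU_1-V^TV$ is called the imbalance of the network. $\mathcal{L}^*$ is the optimal value of $\min_{\Theta\in\mathbb{R}^{D\times m}}\frac12\|Y-X\Theta\|_F^2$. *)

theory Defs
  imports "Jordan_Normal_Form.Char_Poly" "Jordan_Normal_Form.DL_Rank" "HOL-Library.Multiset"
begin

definition append_cols :: "real mat \<Rightarrow> real mat \<Rightarrow> real mat" where
  "append_cols A B = mat (dim_row A) (dim_col A + dim_col B)
     (\<lambda>(i,j). if j < dim_col A then A $$ (i,j) else B $$ (i, j - dim_col A))"

definition diag_sqrt :: "real mat \<Rightarrow> real mat" where
  "diag_sqrt S = mat (dim_row S) (dim_col S) (\<lambda>(i,j). if i = j then sqrt (S $$ (i,i)) else 0)"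

definition frob_sq :: "real mat \<Rightarrow> real" where
  "frob_sq A = (\<Sum>i<dim_row A. \<Sum>j<dim_col A. (A $$ (i,j))^2)"

text \<open>Eigenvalues (roots of the characteristic polynomial, with multiplicity) in
  non-increasing order; for a real symmetric matrix these are all its eigenvalues.\<close>
definition eigs_desc :: "real mat \<Rightarrow> real list" where
  "eigs_desc A = rev (sorted_list_of_multiset (proots (char_poly A)))"

text \<open>\<open>lam A i\<close> = i-th largest eigenvalue (1-based); 0 if out of range.\<close>
definition lam :: "real mat \<Rightarrow> nat \<Rightarrow> real" where
  "lam A i = (if 1 \<le> i \<and> i \<le> length (eigs_desc A) then eigs_desc A ! (i - 1) else 0)"

definition pos_part :: "real \<Rightarrow> real" where
  "pos_part a = max a 0"

definition mat_has_deriv :: "(real \<Rightarrow> real mat) \<Rightarrow> real mat \<Rightarrow> real filter \<Rightarrow> bool" where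
  "mat_has_deriv F F' net \<longleftrightarrow>
     (\<forall>i<dim_row F'. \<forall>j<dim_col F'. ((\<lambda>t. F t $$ (i,j)) has_real_derivative F' $$ (i,j)) net)"

definition mat_tendsto_at_top :: "(real \<Rightarrow> real mat) \<Rightarrow> real mat \<Rightarrow> bool" where
  "mat_tendsto_at_top F L \<longleftrightarrow>
     (\<forall>i<dim_row L. \<forall>j<dim_col L. ((\<lambda>t. F t $$ (i,j)) \<longlongrightarrow> L $$ (i,j)) at_top)"

definition err :: "real mat \<Rightarrow> real mat \<Rightarrow> real mat \<Rightarrow> real mat \<Rightarrow> real mat \<Rightarrow> real mat" where
  "err W Y Sx V U1 = W\<^sup>T * Y - diag_sqrt Sx * U1 * V\<^sup>T"

end

theory Submission
  imports Defs
begin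

text \<open>
  In the coordinates \<open>U = \<Phi>\<^sub>1 U\<^sub>1 + \<Phi>\<^sub>2 U\<^sub>2\<close> the loss is \<open>\<L>\<^sup>* + \<parallel>E\<parallel>\<^sup>2/2\<close>, where
  \<open>E = W\<^sup>T Y - \<Sigma>\<^sub>x\<^sup>1\<^sup>/\<^sup>2 U\<^sub>1 V\<^sup>T\<close>, and the flow is the gradient flow of \<open>\<parallel>E\<parallel>\<^sup>2/2\<close>.
  Along it the imbalance \<open>\<Lambda> = U\<^sub>1\<^sup>T U\<^sub>1 - V\<^sup>T V\<close> is conserved. Writing \<open>G = \<Sigma>\<^sub>x\<^sup>1\<^sup>/\<^sup>2 E\<close>,
  the squared speed is \<open>\<parallel>G V\<parallel>\<^sup>2 + \<parallel>G\<^sup>T U\<^sub>1\<parallel>\<^sup>2\<close>, and a Courant--Fischer argument bounds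
  \<open>\<parallel>G\<^sup>T U\<^sub>1\<parallel>\<^sup>2 \<ge> \<lambda>\<^sub>r(\<Lambda>) \<parallel>G\<parallel>\<^sup>2\<close> and \<open>\<parallel>G V\<parallel>\<^sup>2 \<ge> \<lambda>\<^sub>m(-\<Lambda>) \<parallel>G\<parallel>\<^sup>2\<close>, while
  \<open>\<parallel>G\<parallel>\<^sup>2 \<ge> \<lambda>\<^sub>r(\<Sigma>\<^sub>x) \<parallel>E\<parallel>\<^sup>2\<close>. Hence \<open>\<parallel>E\<parallel>\<^sup>2\<close> decays like \<open>exp (-2 \<lambda>\<^sub>r(\<Sigma>\<^sub>x) c t)\<close>.
  If \<open>c > 0\<close>, this makes the growth rate of \<open>\<parallel>U\<^sub>1\<parallel>\<^sup>2 + \<parallel>V\<parallel>\<^sup>2\<close> integrable, so the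
  parameters stay bounded, the speed decays exponentially, and the flow converges to a point
  with \<open>E = 0\<close>. If \<open>h \<ge> m + r\<close>, both eigenvalues of \<open>\<Lambda>\<close> are nonnegative, as \<open>A\<^sup>T A - B\<^sup>T B\<close>
  is positive semidefinite on the kernel of \<open>B\<close>. The eigenvalue bounds rest on the spectral
  theorem for real symmetric matrices, proved by Householder deflation.
\<close>

lemma index_mult_mat_sum:
  fixes A B :: "'a :: semiring_0 mat"
  assumes "A \<in> carrier_mat p n" and "B \<in> carrier_mat n q" and "i < p" and "j < q"
  shows "(A * B) $$ (i,j) = (\<Sum>l<n. A $$ (i,l) * B $$ (l,j))"
  using assms by (simp add: scalar_prod_def atLeast0LessThan)

lemma transpose_mult_index:
  fixes A B :: "'a :: comm_semiring_0 mat"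
  assumes A: "A \<in> carrier_mat p h" and B: "B \<in> carrier_mat p k" and a: "a < h" and b: "b < k"
  shows "(A\<^sup>T * B) $$ (a,b) = (\<Sum>l<p. A $$ (l,a) * B $$ (l,b))"
proof -
  have "(A\<^sup>T * B) $$ (a,b) = (\<Sum>l<p. A\<^sup>T $$ (a,l) * B $$ (l,b))"
    by (rule index_mult_mat_sum) (use A B a b in auto)
  also have "\<dots> = (\<Sum>l<p. A $$ (l,a) * B $$ (l,b))" by (intro sum.cong refl) (use A a in auto)
  finally show ?thesis .
qed

lemma scalar_prod_self_nonneg: "0 \<le> (v :: real vec) \<bullet> v"
  unfolding scalar_prod_def by (intro sum_nonneg) auto

lemma scalar_prod_self_pos:
  assumes "(v :: real vec) \<in> carrier_vec n" and "v \<noteq> 0\<^sub>v n"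
  shows "0 < v \<bullet> v"
proof -
  obtain i where i: "i < n" "v $ i \<noteq> 0"
    using assms by (metis vec_eq_iff carrier_vecD index_zero_vec(1,2))
  have "v $ i * v $ i \<le> v \<bullet> v"
    unfolding scalar_prod_def by (rule member_le_sum) (use i assms in auto)
  moreover have "0 < v $ i * v $ i" using i by (metis not_real_square_gt_zero)
  ultimately show ?thesis by linarith
qed

section \<open>Spectral theorem for real symmetric matrices\<close>

lemma cnj_hermitian_form_real_symmetric:
  fixes A :: "real mat" and v :: "complex vec"
  assumes A: "A \<in> carrier_mat n n" and sym: "A\<^sup>T = A"
  defines "s \<equiv> \<Sum>i<n. \<Sum>j<n. cnj (v $ i) * complex_of_real (A $$ (i,j)) * v $ j"
  shows "cnj s = s"
proof -
  have symA: "A $$ (j,i) = A $$ (i,j)" if "i < n" "j < n" for i j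
    using sym A that by (metis carrier_matD index_transpose_mat(1))
  have "cnj s = (\<Sum>i<n. \<Sum>j<n. v $ i * complex_of_real (A $$ (i,j)) * cnj (v $ j))"
    unfolding s_def by (simp add: cnj_sum)
  also have "\<dots> = (\<Sum>j<n. \<Sum>i<n. v $ i * complex_of_real (A $$ (i,j)) * cnj (v $ j))"
    by (rule sum.swap)
  also have "\<dots> = s"
    unfolding s_def by (intro sum.cong refl) (simp add: symA mult_ac)
  finally show ?thesis .
qed

lemma eigenvalue_real_symmetric_real:
  fixes A :: "real mat"
  assumes A: "A \<in> carrier_mat n n" and sym: "A\<^sup>T = A"
    and z: "eigenvalue (map_mat complex_of_real A) z"
  shows "z \<in> \<real>"
proof -
  let ?Ac = "map_mat complex_of_real A"
  obtain v where v: "v \<in> carrier_vec n" "v \<noteq> 0\<^sub>v n" "?Ac *\<^sub>v v = z \<cdot>\<^sub>v v"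
    using z A unfolding eigenvalue_def eigenvector_def by auto
  define s where "s = (\<Sum>i<n. \<Sum>j<n. cnj (v $ i) * complex_of_real (A $$ (i,j)) * v $ j)"
  define p where "p = (\<Sum>i<n. (cmod (v $ i))\<^sup>2)"
  have row: "(\<Sum>j<n. complex_of_real (A $$ (i,j)) * v $ j) = z * v $ i" if "i < n" for i
  proof -
    have "(?Ac *\<^sub>v v) $ i = (\<Sum>j<n. complex_of_real (A $$ (i,j)) * v $ j)"
      using that A v(1) by (simp add: scalar_prod_def atLeast0LessThan)
    then show ?thesis using v(1,3) that by simp
  qed
  have "s = (\<Sum>i<n. cnj (v $ i) * (\<Sum>j<n. complex_of_real (A $$ (i,j)) * v $ j))"
    unfolding s_def by (simp add: sum_distrib_left mult.assoc)
  also have "\<dots> = (\<Sum>i<n. cnj (v $ i) * (z * v $ i))"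
    by (intro sum.cong refl) (simp add: row)
  also have "\<dots> = z * (\<Sum>i<n. complex_of_real ((cmod (v $ i))\<^sup>2))"
    unfolding sum_distrib_left
    by (intro sum.cong refl) (simp add: complex_norm_square[symmetric] mult.left_commute mult.commute)
  also have "\<dots> = z * complex_of_real p" unfolding p_def by simp
  finally have s: "s = z * complex_of_real p" .
  have "0 < p"
  proof -
    obtain i where i: "i < n" "v $ i \<noteq> 0"
      using v(1,2) by (metis vec_eq_iff carrier_vecD index_zero_vec(1,2))
    have "(cmod (v $ i))\<^sup>2 \<le> p" unfolding p_def by (rule member_le_sum) (use i in auto)
    moreover have "0 < (cmod (v $ i))\<^sup>2" using i by simp
    ultimately show ?thesis by linarith
  qed
  moreover have "cnj s = s" unfolding s_def by (rule cnj_hermitian_form_real_symmetric[OF A sym])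
  ultimately have "cnj z = z" unfolding s by simp
  then show ?thesis using Reals_cnj_iff by blast
qed

lemma char_poly_real_symmetric_has_root:
  fixes A :: "real mat"
  assumes A: "A \<in> carrier_mat n n" and sym: "A\<^sup>T = A" and n: "0 < n"
  shows "\<exists>x. poly (char_poly A) x = 0"
proof -
  let ?Ac = "map_mat complex_of_real A"
  have Ac: "?Ac \<in> carrier_mat n n" using A by auto
  obtain as where cp: "char_poly ?Ac = (\<Prod>a\<leftarrow>as. [:-a,1:])" and las: "length as = n"
    using char_poly_factorized[OF Ac] by auto
  define z where "z = as ! 0"
  have root: "poly (char_poly ?Ac) z = 0"
    unfolding cp poly_prod_list z_def using las n by (auto simp: prod_list_zero_iff)
  then have "z \<in> \<real>"
    using eigenvalue_root_char_poly[OF Ac] eigenvalue_real_symmetric_real[OF A sym] by blast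
  then obtain x where x: "z = complex_of_real x" by (auto elim: Reals_cases)
  have "poly (map_poly complex_of_real (char_poly A)) (complex_of_real x) = 0"
    using root of_real_hom.char_poly_hom[OF A] unfolding x by metis
  then show ?thesis by (auto simp: of_real_hom.poly_map_poly)
qed

text \<open>For \<open>w = 0\<close> the division by zero makes the reflection the identity.\<close>
definition reflection :: "real vec \<Rightarrow> real mat" where
  "reflection w = mat (dim_vec w) (dim_vec w)
     (\<lambda>(i,j). (if i = j then 1 else 0) - 2 * w $ i * w $ j / (w \<bullet> w))"

lemma div_mult_self_cancel: "(a :: real) / (s * s) * s = a / s"
  by (cases "s = 0") (simp_all add: field_simps)

lemma reflection_carrier: "w \<in> carrier_vec n \<Longrightarrow> reflection w \<in> carrier_mat n n"
  unfolding reflection_def by auto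

lemma reflection_orthogonal:
  assumes w: "w \<in> carrier_vec n"
  shows "(reflection w)\<^sup>T * reflection w = 1\<^sub>m n"
proof (rule eq_matI)
  define s where "s = w \<bullet> w"
  have s: "s = (\<Sum>k<n. (w $ k)\<^sup>2)"
    unfolding s_def scalar_prod_def using w by (simp add: atLeast0LessThan power2_eq_square)
  have H: "reflection w $$ (a,b) = (if a = b then 1 else 0) - 2 * w $ a * w $ b / s"
    if "a < n" "b < n" for a b
    using w that unfolding reflection_def s_def by auto
  fix i j assume "i < dim_row (1\<^sub>m n :: real mat)" "j < dim_col (1\<^sub>m n :: real mat)"
  then have i: "i < n" and j: "j < n" by auto
  have "((reflection w)\<^sup>T * reflection w) $$ (i,j)
      = (\<Sum>k<n. reflection w $$ (k,i) * reflection w $$ (k,j))"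
    by (rule transpose_mult_index) (use reflection_carrier[OF w] i j in auto)
  also have "\<dots> = (\<Sum>k<n. ((if k = i then 1 else 0) - 2 * w $ k * w $ i / s)
                  * ((if k = j then 1 else 0) - 2 * w $ k * w $ j / s))"
    by (intro sum.cong refl) (use i j in \<open>auto simp: H\<close>)
  also have "\<dots> = (\<Sum>k<n. (if k = i then (if k = j then 1 else 0) else 0))
      - (\<Sum>k<n. (if k = i then 2 * w $ k * w $ j / s else 0))
      - (\<Sum>k<n. (if k = j then 2 * w $ k * w $ i / s else 0))
      + (\<Sum>k<n. 4 * w $ i * w $ j / (s * s) * (w $ k)\<^sup>2)"
    unfolding sum_subtractf[symmetric] sum.distrib[symmetric]
    by (rule sum.cong, simp, cases "s = 0", auto simp: field_simps power2_eq_square)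
  also have "(\<Sum>k<n. 4 * w $ i * w $ j / (s * s) * (w $ k)\<^sup>2) = 4 * w $ i * w $ j / s"
    unfolding sum_distrib_left[symmetric] s[symmetric] by (rule div_mult_self_cancel)
  also have "(\<Sum>k<n. (if k = i then (if k = j then 1 else 0) else 0)) - (\<Sum>k<n. (if k = i then 2 * w $ k * w $ j / s else 0))
      - (\<Sum>k<n. (if k = j then 2 * w $ k * w $ i / s else 0))
      = (if i = j then 1 else 0) - 4 * w $ i * w $ j / s"
    using i j by simp
  finally show "((reflection w)\<^sup>T * reflection w) $$ (i,j) = 1\<^sub>m n $$ (i,j)" using i j by simp
qed (use reflection_carrier[OF w] in auto)

lemma reflection_unit_vec_col_0:
  assumes u: "u \<in> carrier_vec n" and n: "0 < n" and unit: "u \<bullet> u = 1"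
  shows "col (reflection (u - unit_vec n 0)) 0 = u"
proof (rule eq_vecI)
  define w where "w = u - unit_vec n 0"
  have w: "w \<in> carrier_vec n" unfolding w_def using u by auto
  have "w \<bullet> w = u \<bullet> u - 2 * u $ 0 + 1"
    unfolding w_def using u n
    by (simp add: scalar_prod_minus_distrib[of _ n] minus_scalar_prod_distrib[of _ n])
  then have s: "w \<bullet> w = - 2 * w $ 0" using unit n u unfolding w_def by simp
  fix i assume "i < dim_vec u"
  then have i: "i < n" using u by simp
  have H: "col (reflection w) 0 $ i = (if i = 0 then 1 else 0) - 2 * w $ i * w $ 0 / (w \<bullet> w)"
    using w i n unfolding reflection_def by auto
  have ui: "u $ i = w $ i + (if i = 0 then 1 else 0)" using u i n unfolding w_def by simp
  show "col (reflection w) 0 $ i = u $ i"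
  proof (cases "w $ 0 = 0")
    case True
    then have "w = 0\<^sub>v n" using s scalar_prod_self_pos[OF w] by fastforce
    then show ?thesis using H ui i by simp
  next
    case False
    then show ?thesis using H ui unfolding s by (simp add: field_simps)
  qed
qed (use u reflection_carrier[of "u - unit_vec n 0" n] in auto)

lemma mat_diag_Cons:
  "mat_diag (Suc n) (\<lambda>i. (e # ds) ! i)
     = four_block_mat (mat 1 1 (\<lambda>_. e)) (0\<^sub>m 1 n) (0\<^sub>m n 1) (mat_diag n (\<lambda>i. ds ! i))"
  by (rule eq_matI) (auto simp: mat_diag_def nth_Cons')

lemma block_diag_mult:
  assumes "A1 \<in> carrier_mat n1 k1" "A2 \<in> carrier_mat n2 k2"
    and "B1 \<in> carrier_mat k1 m1" "B2 \<in> carrier_mat k2 m2"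
  shows "four_block_mat A1 (0\<^sub>m n1 k2) (0\<^sub>m n2 k1) A2 * four_block_mat B1 (0\<^sub>m k1 m2) (0\<^sub>m k2 m1) B2
       = four_block_mat (A1 * B1) (0\<^sub>m n1 m2) (0\<^sub>m n2 m1) (A2 * B2)"
  using assms by (subst mult_four_block_mat) auto

lemma block_diag_transpose:
  assumes "A1 \<in> carrier_mat n1 k1" "A2 \<in> carrier_mat n2 k2"
  shows "(four_block_mat A1 (0\<^sub>m n1 k2) (0\<^sub>m n2 k1) A2)\<^sup>T
       = four_block_mat A1\<^sup>T (0\<^sub>m k1 n2) (0\<^sub>m k2 n1) A2\<^sup>T"
  using assms by (subst transpose_four_block_mat) auto

lemma orthogonal_block_diag_one:
  fixes Q :: "'a :: comm_ring_1 mat"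
  assumes Q: "Q \<in> carrier_mat n n" and QTQ: "Q\<^sup>T * Q = 1\<^sub>m n"
  defines "F \<equiv> four_block_mat (1\<^sub>m 1) (0\<^sub>m 1 n) (0\<^sub>m n 1) Q"
  shows "F \<in> carrier_mat (Suc n) (Suc n)" and "F\<^sup>T * F = 1\<^sub>m (Suc n)"
proof -
  show "F \<in> carrier_mat (Suc n) (Suc n)" unfolding F_def using Q by auto
  have FT: "F\<^sup>T = four_block_mat (1\<^sub>m 1) (0\<^sub>m 1 n) (0\<^sub>m n 1) Q\<^sup>T"
    unfolding F_def using block_diag_transpose[of "1\<^sub>m 1" 1 1 Q n n] Q by simp
  have "F\<^sup>T * F = four_block_mat (1\<^sub>m 1 * 1\<^sub>m 1) (0\<^sub>m 1 n) (0\<^sub>m n 1) (Q\<^sup>T * Q)"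
    unfolding FT unfolding F_def by (rule block_diag_mult) (use Q in auto)
  also have "\<dots> = four_block_mat (1\<^sub>m 1) (0\<^sub>m 1 n) (0\<^sub>m n 1) (1\<^sub>m n)"
    unfolding QTQ by (simp add: left_mult_one_mat[of "1\<^sub>m 1" 1 1])
  also have "\<dots> = 1\<^sub>m (Suc n)" using four_block_one_mat[of 1 n] by simp
  finally show "F\<^sup>T * F = 1\<^sub>m (Suc n)" .
qed

lemma orthogonal_conj_symmetric:
  fixes Q A :: "'a :: comm_ring_1 mat"
  assumes Q: "Q \<in> carrier_mat n k" and A: "A \<in> carrier_mat n n" and sym: "A\<^sup>T = A"
  shows "(Q\<^sup>T * A * Q)\<^sup>T = Q\<^sup>T * A * Q"
proof -
  have QA: "Q\<^sup>T * A \<in> carrier_mat k n" using Q A by auto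
  have "(Q\<^sup>T * A * Q)\<^sup>T = Q\<^sup>T * (Q\<^sup>T * A)\<^sup>T" by (rule transpose_mult[OF QA Q])
  also have "(Q\<^sup>T * A)\<^sup>T = A * Q" using transpose_mult[of "Q\<^sup>T" k n A n] Q A sym by simp
  finally show ?thesis using Q A by (simp add: assoc_mult_mat[of _ k n _ n _ k])
qed

lemma symmetric_first_col_block:
  fixes B :: "'a :: comm_ring_1 mat"
  assumes B: "B \<in> carrier_mat (Suc n) (Suc n)" and sym: "B\<^sup>T = B"
    and col0: "col B 0 = e \<cdot>\<^sub>v unit_vec (Suc n) 0"
  defines "B' \<equiv> mat n n (\<lambda>(i,j). B $$ (Suc i, Suc j))"
  shows "B = four_block_mat (mat 1 1 (\<lambda>_. e)) (0\<^sub>m 1 n) (0\<^sub>m n 1) B'" and "B'\<^sup>T = B'"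
proof -
  have symB: "B $$ (j,i) = B $$ (i,j)" if "i < Suc n" "j < Suc n" for i j
    using sym B that by (metis carrier_matD index_transpose_mat(1))
  have c0: "B $$ (i,0) = (if i = 0 then e else 0)" if "i < Suc n" for i
    using arg_cong[OF col0, of "\<lambda>v. v $ i"] B that by auto
  show "B = four_block_mat (mat 1 1 (\<lambda>_. e)) (0\<^sub>m 1 n) (0\<^sub>m n 1) B'"
  proof (rule eq_matI)
    fix i j assume "i < dim_row (four_block_mat (mat 1 1 (\<lambda>_. e)) (0\<^sub>m 1 n) (0\<^sub>m n 1) B')"
      and "j < dim_col (four_block_mat (mat 1 1 (\<lambda>_. e)) (0\<^sub>m 1 n) (0\<^sub>m n 1) B')"
    then have ij: "i < Suc n" "j < Suc n" unfolding B'_def by auto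
    show "B $$ (i,j) = four_block_mat (mat 1 1 (\<lambda>_. e)) (0\<^sub>m 1 n) (0\<^sub>m n 1) B' $$ (i,j)"
    proof (cases "i = 0 \<or> j = 0")
      case True
      then show ?thesis using ij c0[of i] c0[of j] symB[of 0 j] by (auto simp: B'_def)
    next
      case False
      then show ?thesis using ij by (auto simp: B'_def)
    qed
  qed (use B in \<open>auto simp: B'_def\<close>)
  show "B'\<^sup>T = B'" unfolding B'_def by (rule eq_matI) (auto simp: symB)
qed

text \<open>The Householder reflection \<open>Q\<close> with \<open>Q e\<^sub>0 = u\<close> turns the first column of
  \<open>Q\<^sup>T A Q\<close> into \<open>e e\<^sub>0\<close>.\<close>
lemma symmetric_deflation:
  fixes A :: "real mat"
  assumes A: "A \<in> carrier_mat (Suc n) (Suc n)" and sym: "A\<^sup>T = A"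
    and u: "u \<in> carrier_vec (Suc n)" and unit: "u \<bullet> u = 1" and eig: "A *\<^sub>v u = e \<cdot>\<^sub>v u"
  obtains Q A' where "Q \<in> carrier_mat (Suc n) (Suc n)" "Q\<^sup>T * Q = 1\<^sub>m (Suc n)"
    and "A' \<in> carrier_mat n n" "A'\<^sup>T = A'"
    and "A = Q * four_block_mat (mat 1 1 (\<lambda>_. e)) (0\<^sub>m 1 n) (0\<^sub>m n 1) A' * Q\<^sup>T"
proof -
  define Q where "Q = reflection (u - unit_vec (Suc n) 0)"
  have Q: "Q \<in> carrier_mat (Suc n) (Suc n)"
    unfolding Q_def by (rule reflection_carrier) (use u in auto)
  have QTQ: "Q\<^sup>T * Q = 1\<^sub>m (Suc n)"
    unfolding Q_def by (rule reflection_orthogonal) (use u in auto)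
  have QQT: "Q * Q\<^sup>T = 1\<^sub>m (Suc n)" using mat_mult_left_right_inverse[OF _ _ QTQ] Q by auto
  have colQ: "col Q 0 = u" unfolding Q_def by (rule reflection_unit_vec_col_0[OF u _ unit]) simp
  define B where "B = Q\<^sup>T * A * Q"
  have B: "B \<in> carrier_mat (Suc n) (Suc n)" unfolding B_def using Q A by auto
  have "col B 0 = (Q\<^sup>T * A) *\<^sub>v col Q 0"
    unfolding B_def by (rule col_mult2) (use Q A in auto)
  also have "\<dots> = Q\<^sup>T *\<^sub>v (e \<cdot>\<^sub>v u)"
    unfolding eig[symmetric] colQ by (rule assoc_mult_mat_vec) (use Q A u in auto)
  also have "\<dots> = e \<cdot>\<^sub>v (Q\<^sup>T *\<^sub>v col Q 0)" using Q u by (simp add: colQ mult_mat_vec)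
  also have "Q\<^sup>T *\<^sub>v col Q 0 = col (Q\<^sup>T * Q) 0" by (rule col_mult2[symmetric]) (use Q in auto)
  finally have colB: "col B 0 = e \<cdot>\<^sub>v unit_vec (Suc n) 0" unfolding QTQ by simp
  define A' where "A' = mat n n (\<lambda>(i,j). B $$ (Suc i, Suc j))"
  have symB: "B\<^sup>T = B" unfolding B_def by (rule orthogonal_conj_symmetric[OF Q A sym])
  note block = symmetric_first_col_block[OF B symB colB, folded A'_def]
  have "A = (Q * Q\<^sup>T) * A * (Q * Q\<^sup>T)" using A by (simp add: QQT)
  also have "\<dots> = Q * B * Q\<^sup>T"
    unfolding B_def using Q A by (simp add: assoc_mult_mat[of _ "Suc n" "Suc n" _ "Suc n" _ "Suc n"])
  finally have "A = Q * four_block_mat (mat 1 1 (\<lambda>_. e)) (0\<^sub>m 1 n) (0\<^sub>m n 1) A' * Q\<^sup>T"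
    using block(1) by simp
  moreover have "A' \<in> carrier_mat n n" unfolding A'_def by simp
  ultimately show ?thesis using that[OF Q QTQ _ block(2)] by blast
qed

lemma unit_eigenvector_exists:
  fixes A :: "real mat"
  assumes A: "A \<in> carrier_mat n n" and e: "eigenvalue A e"
  obtains u where "u \<in> carrier_vec n" "u \<bullet> u = 1" "A *\<^sub>v u = e \<cdot>\<^sub>v u"
proof -
  obtain v where v: "v \<in> carrier_vec n" "v \<noteq> 0\<^sub>v n" "A *\<^sub>v v = e \<cdot>\<^sub>v v"
    using e A unfolding eigenvalue_def eigenvector_def by auto
  define u where "u = (1 / sqrt (v \<bullet> v)) \<cdot>\<^sub>v v"
  have pos: "0 < v \<bullet> v" by (rule scalar_prod_self_pos[OF v(1,2)])
  have "u \<in> carrier_vec n" unfolding u_def using v by auto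
  moreover have "u \<bullet> u = 1"
    unfolding u_def using v(1) pos by (simp add: smult_scalar_prod_distrib scalar_prod_smult_distrib)
  moreover have "A *\<^sub>v u = e \<cdot>\<^sub>v u"
    unfolding u_def using v A by (simp add: mult_mat_vec smult_smult_assoc mult.commute)
  ultimately show ?thesis using that by blast
qed

lemma eigs_desc_Cons:
  assumes "proots (char_poly A) = add_mset e M" and "\<forall>x\<in>#M. x \<le> e"
  shows "eigs_desc A = e # rev (sorted_list_of_multiset M)"
proof -
  let ?L = "sorted_list_of_multiset M"
  have "mset (?L @ [e]) = add_mset e M" by simp
  moreover have "sorted (?L @ [e])" using assms(2) by (auto simp: sorted_append)
  ultimately have "sorted_list_of_multiset (add_mset e M) = ?L @ [e]"
    by (metis sorted_list_of_multiset_mset sorted_sort_id)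
  then show ?thesis unfolding eigs_desc_def assms(1) by simp
qed

lemma eigs_desc_dim_0: "A \<in> carrier_mat 0 0 \<Longrightarrow> eigs_desc A = []"
proof -
  assume A: "A \<in> carrier_mat 0 0"
  from degree_monic_char_poly[OF A] have "char_poly A = 1"
    by (metis One_nat_def coeff_pCons_0 degree_0_id one_pCons)
  then show ?thesis unfolding eigs_desc_def by simp
qed

lemma char_poly_1x1: "char_poly (mat 1 1 (\<lambda>_. e)) = [:-e, 1:]"
proof -
  have "upper_triangular (mat 1 1 (\<lambda>_. e))" by (auto simp: upper_triangular_def)
  from char_poly_upper_triangular[OF _ this, of 1] show ?thesis by (simp add: diag_mat_def)
qed

lemma char_poly_orthogonal_conj:
  fixes Q :: "real mat"
  assumes Q: "Q \<in> carrier_mat n n" and QTQ: "Q\<^sup>T * Q = 1\<^sub>m n" and B: "B \<in> carrier_mat n n"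
  shows "char_poly (Q * B * Q\<^sup>T) = char_poly B"
proof -
  have QQT: "Q * Q\<^sup>T = 1\<^sub>m n" using mat_mult_left_right_inverse[OF _ _ QTQ] Q by auto
  have "similar_mat (Q * B * Q\<^sup>T) B"
    unfolding similar_mat_def similar_mat_wit_def Let_def
    by (rule exI[of _ Q], rule exI[of _ "Q\<^sup>T"]) (use Q B QQT QTQ in auto)
  then show ?thesis by (rule char_poly_similar)
qed

lemma eigs_desc_deflation:
  fixes A' :: "real mat"
  assumes Q: "Q \<in> carrier_mat (Suc n) (Suc n)" and QTQ: "Q\<^sup>T * Q = 1\<^sub>m (Suc n)"
    and A': "A' \<in> carrier_mat n n"
    and A: "A = Q * four_block_mat (mat 1 1 (\<lambda>_. e)) (0\<^sub>m 1 n) (0\<^sub>m n 1) A' * Q\<^sup>T"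
    and max: "\<forall>y. y \<in># proots (char_poly A) \<longrightarrow> y \<le> e"
  shows "eigs_desc A = e # eigs_desc A'"
proof -
  have "char_poly A = char_poly (four_block_mat (mat 1 1 (\<lambda>_. e)) (0\<^sub>m 1 n) (0\<^sub>m n 1) A')"
    unfolding A by (rule char_poly_orthogonal_conj[OF Q QTQ]) (use A' in auto)
  also have "\<dots> = char_poly (mat 1 1 (\<lambda>_. e)) * char_poly A'"
    by (rule char_poly_four_block_zeros_col) (use A' in auto)
  also have "\<dots> = [:-e,1:] * char_poly A'" by (simp only: char_poly_1x1)
  finally have cp: "char_poly A = [:-e,1:] * char_poly A'" .
  have "char_poly A' \<noteq> 0" using degree_monic_char_poly[OF A'] by auto
  then have pr: "proots (char_poly A) = add_mset e (proots (char_poly A'))"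
    unfolding cp by (simp add: proots_mult del: mult_pCons_left)
  show ?thesis
    using eigs_desc_Cons[OF pr] max unfolding pr eigs_desc_def by simp
qed

lemma block_diag_conj:
  fixes Q D :: "'a :: comm_ring_1 mat"
  assumes Q: "Q \<in> carrier_mat n n" and D: "D \<in> carrier_mat n n"
  defines "F \<equiv> four_block_mat (1\<^sub>m 1) (0\<^sub>m 1 n) (0\<^sub>m n 1) Q"
  shows "four_block_mat (mat 1 1 (\<lambda>_. e)) (0\<^sub>m 1 n) (0\<^sub>m n 1) (Q * D * Q\<^sup>T)
       = F * four_block_mat (mat 1 1 (\<lambda>_. e)) (0\<^sub>m 1 n) (0\<^sub>m n 1) D * F\<^sup>T"
proof -
  have FT: "F\<^sup>T = four_block_mat (1\<^sub>m 1) (0\<^sub>m 1 n) (0\<^sub>m n 1) Q\<^sup>T"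
    unfolding F_def using block_diag_transpose[of "1\<^sub>m 1" 1 1 Q n n] Q by simp
  have "F * four_block_mat (mat 1 1 (\<lambda>_. e)) (0\<^sub>m 1 n) (0\<^sub>m n 1) D
      = four_block_mat (1\<^sub>m 1 * mat 1 1 (\<lambda>_. e)) (0\<^sub>m 1 n) (0\<^sub>m n 1) (Q * D)"
    unfolding F_def by (rule block_diag_mult) (use Q D in auto)
  also have "\<dots> * F\<^sup>T = four_block_mat (1\<^sub>m 1 * mat 1 1 (\<lambda>_. e) * 1\<^sub>m 1) (0\<^sub>m 1 n) (0\<^sub>m n 1) (Q * D * Q\<^sup>T)"
    unfolding FT by (rule block_diag_mult) (use Q D in auto)
  finally show ?thesis by simp
qed

lemma conj_mult_assoc:
  fixes Q F M :: "'a :: comm_ring_1 mat"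
  assumes Q: "Q \<in> carrier_mat n n" and F: "F \<in> carrier_mat n n" and M: "M \<in> carrier_mat n n"
  shows "Q * (F * M * F\<^sup>T) * Q\<^sup>T = (Q * F) * M * (Q * F)\<^sup>T"
  using Q F M by (simp add: transpose_mult[OF Q F] assoc_mult_mat[of _ n n _ n _ n])

lemma orthogonal_mult:
  fixes Q F :: "'a :: comm_ring_1 mat"
  assumes "Q \<in> carrier_mat n n" "Q\<^sup>T * Q = 1\<^sub>m n" "F \<in> carrier_mat n n" "F\<^sup>T * F = 1\<^sub>m n"
  shows "(Q * F)\<^sup>T * (Q * F) = 1\<^sub>m n"
proof -
  have "Q\<^sup>T * (Q * F) = (Q\<^sup>T * Q) * F" by (rule assoc_mult_mat[symmetric]) (use assms in auto)
  then have "Q\<^sup>T * (Q * F) = F" using assms by simp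
  then show ?thesis using assms by (simp add: transpose_mult assoc_mult_mat[of _ n n _ n _ n])
qed

theorem real_symmetric_spectral:
  fixes A :: "real mat"
  assumes "A \<in> carrier_mat n n" and "A\<^sup>T = A"
  shows "\<exists>Q. Q \<in> carrier_mat n n \<and> Q\<^sup>T * Q = 1\<^sub>m n \<and> length (eigs_desc A) = n
           \<and> A = Q * mat_diag n (\<lambda>i. eigs_desc A ! i) * Q\<^sup>T"
  using assms
proof (induction n arbitrary: A)
  case 0
  then show ?case by (intro exI[of _ "1\<^sub>m 0"]) (auto simp: eigs_desc_dim_0 intro!: eq_matI)
next
  case (Suc n A)
  note A = Suc.prems(1) and sym = Suc.prems(2)
  have cp0: "char_poly A \<noteq> 0" using degree_monic_char_poly[OF A] by auto
  then have "set_mset (proots (char_poly A)) \<noteq> {}"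
    using char_poly_real_symmetric_has_root[OF A sym] by auto
  then obtain e where e: "e \<in># proots (char_poly A)" and max: "\<forall>y. y \<in># proots (char_poly A) \<longrightarrow> y \<le> e"
    by (metis Max_ge Max_in finite_set_mset)
  have "eigenvalue A e" using e cp0 eigenvalue_root_char_poly[OF A] by simp
  then obtain u where u: "u \<in> carrier_vec (Suc n)" "u \<bullet> u = 1" "A *\<^sub>v u = e \<cdot>\<^sub>v u"
    using unit_eigenvector_exists[OF A] by blast
  obtain Q A' where Q: "Q \<in> carrier_mat (Suc n) (Suc n)" "Q\<^sup>T * Q = 1\<^sub>m (Suc n)"
    and A': "A' \<in> carrier_mat n n" "A'\<^sup>T = A'"
    and decomp: "A = Q * four_block_mat (mat 1 1 (\<lambda>_. e)) (0\<^sub>m 1 n) (0\<^sub>m n 1) A' * Q\<^sup>T"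
    by (rule symmetric_deflation[OF A sym u])
  have eigs: "eigs_desc A = e # eigs_desc A'" by (rule eigs_desc_deflation[OF Q A'(1) decomp max])
  obtain Q' where Q': "Q' \<in> carrier_mat n n" "Q'\<^sup>T * Q' = 1\<^sub>m n" "length (eigs_desc A') = n"
    and A'_eq: "A' = Q' * mat_diag n (\<lambda>i. eigs_desc A' ! i) * Q'\<^sup>T"
    using Suc.IH[OF A'] by blast
  define D' where "D' = mat_diag n (\<lambda>i. eigs_desc A' ! i)"
  define D where "D = mat_diag (Suc n) (\<lambda>i. eigs_desc A ! i)"
  define F where "F = four_block_mat (1\<^sub>m 1) (0\<^sub>m 1 n) (0\<^sub>m n 1) Q'"
  note F = orthogonal_block_diag_one[OF Q'(1,2), folded F_def]
  have "four_block_mat (mat 1 1 (\<lambda>_. e)) (0\<^sub>m 1 n) (0\<^sub>m n 1) A'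
      = F * four_block_mat (mat 1 1 (\<lambda>_. e)) (0\<^sub>m 1 n) (0\<^sub>m n 1) D' * F\<^sup>T"
    unfolding F_def A'_eq[folded D'_def] by (rule block_diag_conj[OF Q'(1)]) (simp add: D'_def)
  also have "four_block_mat (mat 1 1 (\<lambda>_. e)) (0\<^sub>m 1 n) (0\<^sub>m n 1) D' = D"
    unfolding D_def D'_def eigs mat_diag_Cons ..
  finally have "A = Q * (F * D * F\<^sup>T) * Q\<^sup>T" using decomp by simp
  also have "\<dots> = (Q * F) * D * (Q * F)\<^sup>T"
    by (rule conj_mult_assoc[OF Q(1) F(1)]) (simp add: D_def)
  finally have "A = (Q * F) * D * (Q * F)\<^sup>T" .
  moreover have "(Q * F)\<^sup>T * (Q * F) = 1\<^sub>m (Suc n)" by (rule orthogonal_mult[OF Q F])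
  moreover have "Q * F \<in> carrier_mat (Suc n) (Suc n)" using Q(1) F(1) by simp
  moreover have "length (eigs_desc A) = Suc n" using eigs Q'(3) by simp
  ultimately show ?case unfolding D_def by blast
qed

section \<open>Eigenvalue bounds for \<open>A\<^sup>T A - B\<^sup>T B\<close>\<close>

lemma gram_diff_carrier:
  assumes "A \<in> carrier_mat p h" and "B \<in> carrier_mat q h"
  shows "A\<^sup>T * A - B\<^sup>T * B \<in> carrier_mat h h"
  using assms by auto

lemma gram_diff_symmetric:
  fixes A B :: "'a :: comm_ring_1 mat"
  assumes A: "A \<in> carrier_mat p h" and B: "B \<in> carrier_mat q h"
  shows "(A\<^sup>T * A - B\<^sup>T * B)\<^sup>T = A\<^sup>T * A - B\<^sup>T * B"
proof -
  have "(A\<^sup>T * A)\<^sup>T = A\<^sup>T * A" using transpose_mult[of "A\<^sup>T" h p A h] A by simp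
  moreover have "(B\<^sup>T * B)\<^sup>T = B\<^sup>T * B" using transpose_mult[of "B\<^sup>T" h q B h] B by simp
  ultimately show ?thesis using transpose_minus[of "A\<^sup>T * A" h h "B\<^sup>T * B"] A B by simp
qed

lemma quad_form_gram_diff:
  fixes A B :: "real mat"
  assumes A: "A \<in> carrier_mat p h" and B: "B \<in> carrier_mat q h" and y: "y \<in> carrier_vec h"
  shows "y \<bullet> ((A\<^sup>T * A - B\<^sup>T * B) *\<^sub>v y) = (A *\<^sub>v y) \<bullet> (A *\<^sub>v y) - (B *\<^sub>v y) \<bullet> (B *\<^sub>v y)"
proof -
  have "(A\<^sup>T * A - B\<^sup>T * B) *\<^sub>v y = (A\<^sup>T * A) *\<^sub>v y - (B\<^sup>T * B) *\<^sub>v y"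
    by (rule minus_mult_distrib_mat_vec) (use A B y in auto)
  also have "(A\<^sup>T * A) *\<^sub>v y = A\<^sup>T *\<^sub>v (A *\<^sub>v y)"
    by (rule assoc_mult_mat_vec) (use A y in auto)
  also have "(B\<^sup>T * B) *\<^sub>v y = B\<^sup>T *\<^sub>v (B *\<^sub>v y)"
    by (rule assoc_mult_mat_vec) (use B y in auto)
  finally have "(A\<^sup>T * A - B\<^sup>T * B) *\<^sub>v y = A\<^sup>T *\<^sub>v (A *\<^sub>v y) - B\<^sup>T *\<^sub>v (B *\<^sub>v y)" .
  then have "y \<bullet> ((A\<^sup>T * A - B\<^sup>T * B) *\<^sub>v y) = y \<bullet> (A\<^sup>T *\<^sub>v (A *\<^sub>v y)) - y \<bullet> (B\<^sup>T *\<^sub>v (B *\<^sub>v y))"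
    using A B y by (simp add: scalar_prod_minus_distrib[of _ h])
  also have "y \<bullet> (A\<^sup>T *\<^sub>v (A *\<^sub>v y)) = (A *\<^sub>v y) \<bullet> (A *\<^sub>v y)"
    using transpose_vec_mult_scalar[OF A y, of "A *\<^sub>v y"] A y by (simp add: comm_scalar_prod[of _ h])
  also have "y \<bullet> (B\<^sup>T *\<^sub>v (B *\<^sub>v y)) = (B *\<^sub>v y) \<bullet> (B *\<^sub>v y)"
    using transpose_vec_mult_scalar[OF B y, of "B *\<^sub>v y"] B y by (simp add: comm_scalar_prod[of _ h])
  finally show ?thesis .
qed

lemma mat_diag_mult_vec:
  "c \<in> carrier_vec n \<Longrightarrow> mat_diag n d *\<^sub>v c = vec n (\<lambda>i. d i * c $ i)"
  by (rule eq_vecI) (auto simp: mat_diag_def scalar_prod_def if_distrib if_distribR sum.delta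
      cong: if_cong)

lemma quad_form_orthogonal_diag:
  fixes Q :: "real mat"
  assumes Q: "Q \<in> carrier_mat n n" and QTQ: "Q\<^sup>T * Q = 1\<^sub>m n" and c: "c \<in> carrier_vec n"
  shows "(Q *\<^sub>v c) \<bullet> ((Q * mat_diag n d * Q\<^sup>T) *\<^sub>v (Q *\<^sub>v c)) = (\<Sum>i<n. d i * (c $ i)\<^sup>2)"
proof -
  have D: "mat_diag n d \<in> carrier_mat n n" by (rule mat_diag_dim)
  have Dc: "mat_diag n d *\<^sub>v c \<in> carrier_vec n" using mult_mat_vec_carrier[OF D c] .
  have QTQc: "Q\<^sup>T *\<^sub>v (Q *\<^sub>v c) = c"
    using Q c QTQ by (simp add: assoc_mult_mat_vec[symmetric, of _ n n _ n])
  have "(Q * mat_diag n d * Q\<^sup>T) *\<^sub>v (Q *\<^sub>v c) = (Q * mat_diag n d) *\<^sub>v (Q\<^sup>T *\<^sub>v (Q *\<^sub>v c))"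
    by (rule assoc_mult_mat_vec[of _ n n _ n]) (use Q D c in auto)
  also have "\<dots> = Q *\<^sub>v (mat_diag n d *\<^sub>v c)"
    unfolding QTQc by (rule assoc_mult_mat_vec[of _ n n _ n]) (use Q D c in auto)
  finally have L: "(Q * mat_diag n d * Q\<^sup>T) *\<^sub>v (Q *\<^sub>v c) = Q *\<^sub>v (mat_diag n d *\<^sub>v c)" .
  have "(Q *\<^sub>v c) \<bullet> (Q *\<^sub>v (mat_diag n d *\<^sub>v c)) = (Q\<^sup>T *\<^sub>v (Q *\<^sub>v c)) \<bullet> (mat_diag n d *\<^sub>v c)"
    using transpose_vec_mult_scalar[OF Q Dc, of "Q *\<^sub>v c"] Q c by simp
  also have "\<dots> = (\<Sum>i<n. d i * (c $ i)\<^sup>2)"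
    using c by (simp add: QTQc mat_diag_mult_vec scalar_prod_def atLeast0LessThan power2_eq_square mult_ac)
  finally show ?thesis unfolding L .
qed

lemma quad_form_orthogonal_diag_lower:
  fixes Q :: "real mat"
  assumes Q: "Q \<in> carrier_mat n n" and QTQ: "Q\<^sup>T * Q = 1\<^sub>m n" and z: "z \<in> carrier_vec n"
    and le: "\<And>i. i < n \<Longrightarrow> z $ i \<noteq> 0 \<Longrightarrow> a \<le> d i"
  shows "a * (z \<bullet> z) \<le> (Q *\<^sub>v z) \<bullet> ((Q * mat_diag n d * Q\<^sup>T) *\<^sub>v (Q *\<^sub>v z))"
proof -
  have "a * (z \<bullet> z) = (\<Sum>i<n. a * (z $ i)\<^sup>2)"
    using z by (simp add: scalar_prod_def atLeast0LessThan sum_distrib_left power2_eq_square)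
  also have "\<dots> \<le> (\<Sum>i<n. d i * (z $ i)\<^sup>2)"
    by (rule sum_mono) (use le in \<open>force intro: mult_right_mono\<close>)
  finally show ?thesis unfolding quad_form_orthogonal_diag[OF Q QTQ z] .
qed

lemma quad_form_orthogonal_diag_upper:
  fixes Q :: "real mat"
  assumes Q: "Q \<in> carrier_mat n n" and QTQ: "Q\<^sup>T * Q = 1\<^sub>m n" and z: "z \<in> carrier_vec n"
    and le: "\<And>i. i < n \<Longrightarrow> z $ i \<noteq> 0 \<Longrightarrow> d i \<le> a"
  shows "(Q *\<^sub>v z) \<bullet> ((Q * mat_diag n d * Q\<^sup>T) *\<^sub>v (Q *\<^sub>v z)) \<le> a * (z \<bullet> z)"
proof -
  have "(\<Sum>i<n. d i * (z $ i)\<^sup>2) \<le> (\<Sum>i<n. a * (z $ i)\<^sup>2)"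
    by (rule sum_mono) (use le in \<open>force intro: mult_right_mono\<close>)
  also have "\<dots> = a * (z \<bullet> z)"
    using z by (simp add: scalar_prod_def atLeast0LessThan sum_distrib_left power2_eq_square)
  finally show ?thesis unfolding quad_form_orthogonal_diag[OF Q QTQ z] .
qed

lemma orthogonal_transpose_norm:
  fixes Q :: "real mat"
  assumes Q: "Q \<in> carrier_mat n n" and QTQ: "Q\<^sup>T * Q = 1\<^sub>m n" and v: "v \<in> carrier_vec n"
  shows "(Q\<^sup>T *\<^sub>v v) \<bullet> (Q\<^sup>T *\<^sub>v v) = v \<bullet> v"
proof -
  have QQT: "Q * Q\<^sup>T = 1\<^sub>m n" using mat_mult_left_right_inverse[OF _ _ QTQ] Q by auto
  have "(Q\<^sup>T *\<^sub>v v) \<bullet> (Q\<^sup>T *\<^sub>v v) = v \<bullet> (Q *\<^sub>v (Q\<^sup>T *\<^sub>v v))"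
    by (rule transpose_vec_mult_scalar) (use Q v in auto)
  also have "Q *\<^sub>v (Q\<^sup>T *\<^sub>v v) = (Q * Q\<^sup>T) *\<^sub>v v"
    by (rule assoc_mult_mat_vec[symmetric]) (use Q v in auto)
  finally show ?thesis using QQT v by simp
qed

text \<open>If \<open>M\<close> is bounded below by \<open>\<surd>a\<close> then \<open>x = M c\<close> is solvable, and
  \<open>|x|\<^sup>2 = c \<bullet> M\<^sup>T x \<le> (a |c|\<^sup>2 + |M\<^sup>T x|\<^sup>2 / a) / 2 \<le> (|x|\<^sup>2 + |M\<^sup>T x|\<^sup>2 / a) / 2\<close>.\<close>
lemma transpose_norm_lower_bound:
  fixes M :: "real mat"
  assumes M: "M \<in> carrier_mat p p" and a: "0 < a"
    and low: "\<And>c. c \<in> carrier_vec p \<Longrightarrow> a * (c \<bullet> c) \<le> (M *\<^sub>v c) \<bullet> (M *\<^sub>v c)"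
    and x: "x \<in> carrier_vec p"
  shows "a * (x \<bullet> x) \<le> (M\<^sup>T *\<^sub>v x) \<bullet> (M\<^sup>T *\<^sub>v x)"
proof -
  have "det M \<noteq> 0"
  proof
    assume "det M = 0"
    then obtain c where c: "c \<in> carrier_vec p" "c \<noteq> 0\<^sub>v p" "M *\<^sub>v c = 0\<^sub>v p"
      using det_0_iff_vec_prod_zero[OF M] by auto
    have "0 < a * (c \<bullet> c)" using a scalar_prod_self_pos[OF c(1,2)] by simp
    with low[OF c(1)] c(3) show False by simp
  qed
  define c where "c = (1 / det M) \<cdot>\<^sub>v (adj_mat M *\<^sub>v x)"
  have c: "c \<in> carrier_vec p" unfolding c_def using adj_mat(1)[OF M] x by auto
  have "(det M \<cdot>\<^sub>m 1\<^sub>m p) *\<^sub>v x = det M \<cdot>\<^sub>v x" using x by auto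
  then have Mc: "M *\<^sub>v c = x"
    unfolding c_def using M adj_mat[OF M] x \<open>det M \<noteq> 0\<close>
    by (simp add: mult_mat_vec assoc_mult_mat_vec[symmetric, of _ p p _ p] smult_smult_assoc)
  define w where "w = M\<^sup>T *\<^sub>v x"
  have w: "w \<in> carrier_vec p" unfolding w_def using M x by auto
  have xx: "x \<bullet> x = c \<bullet> w"
    using transpose_vec_mult_scalar[OF M c x] Mc c w unfolding w_def by (simp add: comm_scalar_prod)
  have amgm: "2 * (c \<bullet> w) \<le> a * (c \<bullet> c) + (w \<bullet> w) / a"
  proof -
    have "0 \<le> (\<Sum>i<p. (a * c $ i - w $ i)\<^sup>2 / a)" using a by (intro sum_nonneg) simp
    also have "\<dots> = (\<Sum>i<p. a * (c $ i * c $ i) + w $ i * w $ i / a - 2 * (c $ i * w $ i))"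
      using a by (intro sum.cong refl) (simp add: field_simps power2_eq_square)
    also have "\<dots> = a * (c \<bullet> c) + (w \<bullet> w) / a - 2 * (c \<bullet> w)"
      using c w unfolding scalar_prod_def
      by (simp add: atLeast0LessThan sum.distrib sum_subtractf sum_distrib_left sum_divide_distrib)
    finally show ?thesis by linarith
  qed
  have "a * (c \<bullet> c) \<le> x \<bullet> x" using low[OF c] Mc by simp
  then have "x \<bullet> x \<le> (w \<bullet> w) / a" using amgm xx by linarith
  then show ?thesis using a unfolding w_def by (simp add: field_simps)
qed

lemma wide_mat_kernel_nonzero:
  fixes R :: "real mat"
  assumes R: "R \<in> carrier_mat q k" and qk: "q < k"
  obtains c where "c \<in> carrier_vec k" "c \<noteq> 0\<^sub>v k" "R *\<^sub>v c = 0\<^sub>v q"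
proof (cases "q = 0")
  case True
  have "unit_vec k 0 \<noteq> (0\<^sub>v k :: real vec)"
    using qk by (metis index_unit_vec(1) index_zero_vec(1) zero_neq_one True)
  moreover have "R *\<^sub>v unit_vec k 0 = 0\<^sub>v q" using True R by (intro eq_vecI) auto
  ultimately show ?thesis using that[of "unit_vec k 0"] qk by auto
next
  case False
  \<comment> \<open>pad \<open>R\<close> with copies of its first row to a singular square matrix\<close>
  define P where "P = mat k k (\<lambda>(i,j). if i < q then R $$ (i,j) else R $$ (0,j))"
  have P: "P \<in> carrier_mat k k" unfolding P_def by auto
  have "row P 0 = row P q" unfolding P_def using qk False by (intro eq_vecI) auto
  then have "det P = 0" using det_identical_rows[OF P, of 0 q] False qk by auto
  then obtain c where c: "c \<in> carrier_vec k" "c \<noteq> 0\<^sub>v k" "P *\<^sub>v c = 0\<^sub>v k"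
    using det_0_iff_vec_prod_zero[OF P] by auto
  have "R *\<^sub>v c = 0\<^sub>v q"
  proof (rule eq_vecI)
    fix i assume "i < dim_vec (0\<^sub>v q :: real vec)"
    then have i: "i < q" by simp
    have "row R i = row P i" unfolding P_def using i qk R by (intro eq_vecI) auto
    then have "(R *\<^sub>v c) $ i = (P *\<^sub>v c) $ i" using R P i qk by simp
    then show "(R *\<^sub>v c) $ i = 0\<^sub>v q $ i" using c(3) i qk by simp
  qed (use R in auto)
  then show ?thesis using that c by auto
qed

lemma eigs_desc_antimono:
  assumes "i \<le> j" and "j < length (eigs_desc A)"
  shows "eigs_desc A ! j \<le> eigs_desc A ! i"
proof -
  have "sorted (rev (eigs_desc A))" unfolding eigs_desc_def by simp
  then show ?thesis using sorted_rev_nth_mono assms by blast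
qed

lemma lam_nonzero_imp_nth:
  assumes "lam A p \<noteq> 0"
  shows "1 \<le> p" and "p \<le> length (eigs_desc A)" and "lam A p = eigs_desc A ! (p - 1)"
  using assms unfolding lam_def by (auto split: if_splits)

lemma sum_window_shift:
  fixes s k n :: nat
  assumes "s + k \<le> n"
  shows "(\<Sum>j<n. if s \<le> j \<and> j < s + k then f (j - s) else 0) = (\<Sum>j<k. f j)"
proof -
  have "(\<Sum>j<n. if s \<le> j \<and> j < s + k then f (j - s) else 0) = (\<Sum>j\<in>{s..<s + k}. f (j - s))"
    using assms by (intro sum.mono_neutral_cong_right) auto
  also have "\<dots> = (\<Sum>j<k. f j)"
    by (rule sum.reindex_bij_witness[of _ "\<lambda>j. j + s" "\<lambda>j. j - s"]) auto
  finally show ?thesis .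
qed

definition embed_vec :: "nat \<Rightarrow> nat \<Rightarrow> 'a :: zero vec \<Rightarrow> 'a vec" where
  "embed_vec n s c = vec n (\<lambda>i. if s \<le> i \<and> i < s + dim_vec c then c $ (i - s) else 0)"

lemma embed_vec_carrier [simp]: "embed_vec n s c \<in> carrier_vec n"
  unfolding embed_vec_def by simp

lemma embed_vec_index_nonzero:
  "i < n \<Longrightarrow> embed_vec n s c $ i \<noteq> 0 \<Longrightarrow> s \<le> i \<and> i < s + dim_vec c"
  unfolding embed_vec_def by (auto split: if_splits)

lemma embed_vec_scalar_prod_self:
  fixes c :: "'a :: comm_ring vec"
  assumes "c \<in> carrier_vec k" and "s + k \<le> n"
  shows "embed_vec n s c \<bullet> embed_vec n s c = c \<bullet> c"
  using assms sum_window_shift[OF assms(2), of "\<lambda>j. c $ j * c $ j"]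
  unfolding embed_vec_def scalar_prod_def by (simp add: atLeast0LessThan if_distrib if_distribR cong: if_cong)

lemma mult_embed_vec:
  fixes R :: "'a :: comm_ring mat"
  assumes R: "R \<in> carrier_mat q n" and c: "c \<in> carrier_vec k" and sk: "s + k \<le> n"
  shows "R *\<^sub>v embed_vec n s c = mat q k (\<lambda>(i,j). R $$ (i, j + s)) *\<^sub>v c"
proof (rule eq_vecI)
  fix i assume "i < dim_vec (mat q k (\<lambda>(i,j). R $$ (i, j + s)) *\<^sub>v c)"
  then have i: "i < q" by simp
  have "(R *\<^sub>v embed_vec n s c) $ i = (\<Sum>j<n. if s \<le> j \<and> j < s + k then R $$ (i, (j - s) + s) * c $ (j - s) else 0)"
    using R c i unfolding embed_vec_def
    by (auto simp: scalar_prod_def atLeast0LessThan intro!: sum.cong)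
  also have "\<dots> = (\<Sum>j<k. R $$ (i, j + s) * c $ j)" by (rule sum_window_shift[OF sk])
  also have "\<dots> = (mat q k (\<lambda>(i,j). R $$ (i, j + s)) *\<^sub>v c) $ i"
    using c i by (simp add: scalar_prod_def atLeast0LessThan)
  finally show "(R *\<^sub>v embed_vec n s c) $ i = (mat q k (\<lambda>(i,j). R $$ (i, j + s)) *\<^sub>v c) $ i" .
qed (use R in auto)

lemma transpose_norm_leading_cols_le:
  fixes W :: "real mat"
  assumes W: "W \<in> carrier_mat p n" and kn: "k \<le> n" and x: "x \<in> carrier_vec p"
  defines "M \<equiv> mat p k (\<lambda>(i,j). W $$ (i,j))"
  shows "(M\<^sup>T *\<^sub>v x) \<bullet> (M\<^sup>T *\<^sub>v x) \<le> (W\<^sup>T *\<^sub>v x) \<bullet> (W\<^sup>T *\<^sub>v x)"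
proof -
  have "(M\<^sup>T *\<^sub>v x) \<bullet> (M\<^sup>T *\<^sub>v x) = (\<Sum>j<k. ((W\<^sup>T *\<^sub>v x) $ j)\<^sup>2)"
    using W x kn unfolding M_def
    by (auto simp: scalar_prod_def atLeast0LessThan power2_eq_square intro!: sum.cong)
  also have "\<dots> \<le> (\<Sum>j<n. ((W\<^sup>T *\<^sub>v x) $ j)\<^sup>2)" by (rule sum_mono2) (use kn in auto)
  also have "\<dots> = (W\<^sup>T *\<^sub>v x) \<bullet> (W\<^sup>T *\<^sub>v x)"
    using W by (simp add: scalar_prod_def atLeast0LessThan power2_eq_square)
  finally show ?thesis .
qed

lemma quad_form_embed_vec_lower:
  fixes Q :: "real mat"
  assumes Q: "Q \<in> carrier_mat n n" "Q\<^sup>T * Q = 1\<^sub>m n" and c: "c \<in> carrier_vec k" and sk: "s + k \<le> n"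
    and le: "\<And>i. s \<le> i \<Longrightarrow> i < s + k \<Longrightarrow> a \<le> d i"
  defines "y \<equiv> Q *\<^sub>v embed_vec n s c"
  shows "a * (c \<bullet> c) \<le> y \<bullet> ((Q * mat_diag n d * Q\<^sup>T) *\<^sub>v y)"
proof -
  have "a * (c \<bullet> c) = a * (embed_vec n s c \<bullet> embed_vec n s c)"
    using embed_vec_scalar_prod_self[OF c sk] by simp
  also have "\<dots> \<le> y \<bullet> ((Q * mat_diag n d * Q\<^sup>T) *\<^sub>v y)"
    unfolding y_def
  proof (rule quad_form_orthogonal_diag_lower[OF Q embed_vec_carrier])
    fix i assume "i < n" "embed_vec n s c $ i \<noteq> 0"
    then show "a \<le> d i" using embed_vec_index_nonzero[of i n s c] c le by auto
  qed
  finally show ?thesis .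
qed

lemma quad_form_embed_vec_upper:
  fixes Q :: "real mat"
  assumes Q: "Q \<in> carrier_mat n n" "Q\<^sup>T * Q = 1\<^sub>m n" and c: "c \<in> carrier_vec k" and sk: "s + k \<le> n"
    and le: "\<And>i. s \<le> i \<Longrightarrow> i < s + k \<Longrightarrow> d i \<le> a"
  defines "y \<equiv> Q *\<^sub>v embed_vec n s c"
  shows "y \<bullet> ((Q * mat_diag n d * Q\<^sup>T) *\<^sub>v y) \<le> a * (c \<bullet> c)"
proof -
  have "y \<bullet> ((Q * mat_diag n d * Q\<^sup>T) *\<^sub>v y) \<le> a * (embed_vec n s c \<bullet> embed_vec n s c)"
    unfolding y_def
  proof (rule quad_form_orthogonal_diag_upper[OF Q embed_vec_carrier])
    fix i assume "i < n" "embed_vec n s c $ i \<noteq> 0"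
    then show "d i \<le> a" using embed_vec_index_nonzero[of i n s c] c le by auto
  qed
  also have "\<dots> = a * (c \<bullet> c)" using embed_vec_scalar_prod_self[OF c sk] by simp
  finally show ?thesis .
qed

lemma gram_diff_spectral:
  fixes A B :: "real mat"
  assumes A: "A \<in> carrier_mat p h" and B: "B \<in> carrier_mat q h"
  defines "L \<equiv> A\<^sup>T * A - B\<^sup>T * B"
  obtains Q where "Q \<in> carrier_mat h h" "Q\<^sup>T * Q = 1\<^sub>m h" "length (eigs_desc L) = h"
    "L = Q * mat_diag h (\<lambda>i. eigs_desc L ! i) * Q\<^sup>T"
  using real_symmetric_spectral[OF gram_diff_carrier[OF A B] gram_diff_symmetric[OF A B]]
  unfolding L_def by blast

text \<open>A Courant--Fischer argument: on the span of the top \<open>p\<close> eigenvectors of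
  \<open>A\<^sup>T A - B\<^sup>T B\<close> we have \<open>|A y|\<^sup>2 \<ge> \<lambda>\<^sub>p |y|\<^sup>2\<close>, and the bound passes to \<open>A\<^sup>T\<close>.\<close>
lemma lam_gram_diff_lower_bound:
  fixes A B :: "real mat"
  assumes A: "A \<in> carrier_mat p h" and B: "B \<in> carrier_mat q h"
    and pos: "0 < lam (A\<^sup>T * A - B\<^sup>T * B) p" and x: "x \<in> carrier_vec p"
  shows "lam (A\<^sup>T * A - B\<^sup>T * B) p * (x \<bullet> x) \<le> (A\<^sup>T *\<^sub>v x) \<bullet> (A\<^sup>T *\<^sub>v x)"
proof -
  define L where "L = A\<^sup>T * A - B\<^sup>T * B"
  define a where "a = lam L p"
  define ds where "ds = eigs_desc L"
  obtain Q where Q: "Q \<in> carrier_mat h h" "Q\<^sup>T * Q = 1\<^sub>m h" and len: "length ds = h"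
    and Lq: "L = Q * mat_diag h (\<lambda>i. ds ! i) * Q\<^sup>T"
    using gram_diff_spectral[OF A B] unfolding L_def[symmetric] ds_def[symmetric] by blast
  have apos: "0 < a" using pos unfolding a_def L_def .
  have "lam L p \<noteq> 0" using apos unfolding a_def by simp
  note p = lam_nonzero_imp_nth[OF this, folded a_def ds_def, unfolded len]
  define W where "W = A * Q"
  have W: "W \<in> carrier_mat p h" unfolding W_def using A Q by auto
  define M where "M = mat p p (\<lambda>(i,j). W $$ (i,j))"
  have low: "a * (c \<bullet> c) \<le> (M *\<^sub>v c) \<bullet> (M *\<^sub>v c)" if c: "c \<in> carrier_vec p" for c
  proof -
    define y where "y = Q *\<^sub>v embed_vec h 0 c"
    have y: "y \<in> carrier_vec h" unfolding y_def using Q by simp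
    have "a * (c \<bullet> c) \<le> y \<bullet> (L *\<^sub>v y)"
      unfolding Lq y_def
      by (rule quad_form_embed_vec_lower[OF Q c]) (use p len eigs_desc_antimono[of _ "p - 1" L] in
          \<open>auto simp: ds_def\<close>)
    also have "\<dots> = (A *\<^sub>v y) \<bullet> (A *\<^sub>v y) - (B *\<^sub>v y) \<bullet> (B *\<^sub>v y)"
      unfolding L_def by (rule quad_form_gram_diff[OF A B y])
    also have "\<dots> \<le> (A *\<^sub>v y) \<bullet> (A *\<^sub>v y)"
      using scalar_prod_self_nonneg[of "B *\<^sub>v y"] by linarith
    also have "A *\<^sub>v y = W *\<^sub>v embed_vec h 0 c"
      unfolding W_def y_def by (rule assoc_mult_mat_vec[symmetric]) (use A Q in auto)
    also have "\<dots> = mat p p (\<lambda>(i,j). W $$ (i, j + 0)) *\<^sub>v c"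
      by (rule mult_embed_vec[OF W c]) (use p in simp)
    also have "mat p p (\<lambda>(i,j). W $$ (i, j + 0)) = M" unfolding M_def by simp
    finally show ?thesis .
  qed
  have "a * (x \<bullet> x) \<le> (M\<^sup>T *\<^sub>v x) \<bullet> (M\<^sup>T *\<^sub>v x)"
    by (rule transpose_norm_lower_bound[OF _ apos low x]) (simp add: M_def)
  also have "\<dots> \<le> (W\<^sup>T *\<^sub>v x) \<bullet> (W\<^sup>T *\<^sub>v x)"
    unfolding M_def by (rule transpose_norm_leading_cols_le[OF W p(2) x])
  also have "W\<^sup>T *\<^sub>v x = Q\<^sup>T *\<^sub>v (A\<^sup>T *\<^sub>v x)"
    unfolding W_def using A Q x by (simp add: transpose_mult assoc_mult_mat_vec[of _ h p _ p])
  also have "(Q\<^sup>T *\<^sub>v (A\<^sup>T *\<^sub>v x)) \<bullet> (Q\<^sup>T *\<^sub>v (A\<^sup>T *\<^sub>v x)) = (A\<^sup>T *\<^sub>v x) \<bullet> (A\<^sup>T *\<^sub>v x)"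
    by (rule orthogonal_transpose_norm[OF Q]) (use A x in auto)
  finally show ?thesis unfolding a_def L_def .
qed

text \<open>If \<open>p + q \<le> h\<close>, the bottom \<open>h - p + 1\<close> eigenvectors of \<open>A\<^sup>T A - B\<^sup>T B\<close> span a space
  meeting the kernel of \<open>B\<close>, on which the quadratic form is \<open>|A y|\<^sup>2 \<ge> 0\<close>.\<close>
lemma lam_gram_diff_nonneg:
  fixes A B :: "real mat"
  assumes A: "A \<in> carrier_mat p h" and B: "B \<in> carrier_mat q h" and pqh: "p + q \<le> h"
  shows "0 \<le> lam (A\<^sup>T * A - B\<^sup>T * B) p"
proof (rule ccontr)
  define L where "L = A\<^sup>T * A - B\<^sup>T * B"
  define a where "a = lam L p"
  assume "\<not> 0 \<le> lam (A\<^sup>T * A - B\<^sup>T * B) p"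
  then have aneg: "a < 0" unfolding a_def L_def by simp
  define ds where "ds = eigs_desc L"
  obtain Q where Q: "Q \<in> carrier_mat h h" "Q\<^sup>T * Q = 1\<^sub>m h" and len: "length ds = h"
    and Lq: "L = Q * mat_diag h (\<lambda>i. ds ! i) * Q\<^sup>T"
    using gram_diff_spectral[OF A B] unfolding L_def[symmetric] ds_def[symmetric] by blast
  have "lam L p \<noteq> 0" using aneg unfolding a_def by simp
  note p = lam_nonzero_imp_nth[OF this, folded a_def ds_def, unfolded len]
  define s where "s = p - 1"
  define k where "k = h - s"
  have qk: "q < k" and sk: "s + k = h" unfolding k_def s_def using pqh p by auto
  define R where "R = mat q k (\<lambda>(i,j). (B * Q) $$ (i, j + s))"
  obtain c where c: "c \<in> carrier_vec k" "c \<noteq> 0\<^sub>v k" "R *\<^sub>v c = 0\<^sub>v q"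
    using wide_mat_kernel_nonzero[OF _ qk, of R] unfolding R_def by auto
  define y where "y = Q *\<^sub>v embed_vec h s c"
  have "B *\<^sub>v y = (B * Q) *\<^sub>v embed_vec h s c"
    unfolding y_def by (rule assoc_mult_mat_vec[symmetric]) (use B Q in auto)
  also have "\<dots> = R *\<^sub>v c"
    unfolding R_def by (rule mult_embed_vec[OF _ c(1)]) (use B Q sk in auto)
  finally have "B *\<^sub>v y = 0\<^sub>v q" using c(3) by simp
  then have "0 \<le> y \<bullet> (L *\<^sub>v y)"
    unfolding L_def using quad_form_gram_diff[OF A B, of y] Q scalar_prod_self_nonneg
    by (simp add: y_def)
  also have "\<dots> \<le> a * (c \<bullet> c)"
    unfolding Lq y_def
    by (rule quad_form_embed_vec_upper[OF Q c(1)]) (use sk p len eigs_desc_antimono[of "p - 1" _ L] in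
        \<open>auto simp: ds_def s_def\<close>)
  also have "\<dots> < 0" using aneg scalar_prod_self_pos[OF c(1,2)] by (simp add: mult_neg_pos)
  finally show False by simp
qed

lemma proots_linear_factors: "proots (\<Prod>a\<leftarrow>xs. [:- a, 1:]) = mset (xs :: real list)"
proof (induction xs)
  case (Cons x xs)
  have "(\<Prod>a\<leftarrow>xs. [:- a, 1:]) \<noteq> (0 :: real poly)" by (auto simp: prod_list_zero_iff)
  then show ?case using Cons by (simp del: mult_pCons_left add: proots_mult)
qed simp

lemma lam_diagonal_pos:
  fixes S :: "real mat"
  assumes S: "S \<in> carrier_mat r r" and diag: "diagonal_mat S" and pos: "\<forall>i<r. 0 < S $$ (i,i)"
    and r: "1 \<le> r"
  shows "0 < lam S r" and "\<And>i. i < r \<Longrightarrow> lam S r \<le> S $$ (i,i)"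
proof -
  have "upper_triangular S" using diag S unfolding diagonal_mat_def upper_triangular_def by auto
  then have cp: "char_poly S = (\<Prod>a\<leftarrow>diag_mat S. [:- a, 1:])"
    by (rule char_poly_upper_triangular[OF S])
  have "eigs_desc S = rev (sort (diag_mat S))"
    unfolding eigs_desc_def cp proots_linear_factors by (simp add: sorted_list_of_multiset_mset)
  moreover have len: "length (diag_mat S) = r" using S unfolding diag_mat_def by simp
  ultimately have lamS: "lam S r = sort (diag_mat S) ! 0"
    unfolding lam_def using r by (simp add: rev_nth)
  have "sort (diag_mat S) ! 0 \<in> set (diag_mat S)"
    using r len by (metis length_sort nth_mem set_sort le_trans not_one_le_zero not_less)
  then show "0 < lam S r" unfolding lamS using pos S by (auto simp: diag_mat_def)
  fix i assume i: "i < r"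
  have "S $$ (i,i) \<in> set (sort (diag_mat S))" using S i unfolding diag_mat_def by auto
  then obtain k where "k < length (sort (diag_mat S))" "sort (diag_mat S) ! k = S $$ (i,i)"
    unfolding in_set_conv_nth by blast
  then show "lam S r \<le> S $$ (i,i)" unfolding lamS by (metis le0 sorted_nth_mono sorted_sort)
qed

section \<open>Differential inequalities on \<open>[0, \<infinity>)\<close>\<close>

lemma DERIV_nonpos_imp_antimono_nonneg:
  fixes g g' :: "real \<Rightarrow> real"
  assumes d: "\<And>t. 0 \<le> t \<Longrightarrow> (g has_real_derivative g' t) (at t within {0..})"
    and nonpos: "\<And>t. 0 \<le> t \<Longrightarrow> g' t \<le> 0" and ab: "0 \<le> a" "a \<le> b"
  shows "g b \<le> g a"
proof -
  have "continuous_on {0..} g" by (rule DERIV_continuous_on[OF d]) auto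
  then have cont: "continuous_on {a..b} (\<lambda>t. - g t)"
    by (intro continuous_intros) (rule continuous_on_subset, use ab in auto)
  have "- g a \<le> - g b"
  proof (rule DERIV_nonneg_imp_increasing_open[OF ab(2) _ cont])
    fix x assume x: "a < x" "x < b"
    have "(g has_real_derivative g' x) (at x within {0<..})"
      by (rule DERIV_subset[OF d]) (use x ab in auto)
    moreover have "at x within {0<..} = at x" by (rule at_within_open) (use x ab in auto)
    ultimately have "((\<lambda>t. - g t) has_real_derivative - g' x) (at x)" by (simp add: DERIV_minus)
    then show "\<exists>y. ((\<lambda>t. - g t) has_real_derivative y) (at x) \<and> 0 \<le> y"
      using nonpos[of x] x ab by auto
  qed
  then show ?thesis by simp
qed

lemma DERIV_zero_imp_constant_nonneg:
  fixes g :: "real \<Rightarrow> real"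
  assumes d: "\<And>t. 0 \<le> t \<Longrightarrow> (g has_real_derivative 0) (at t within {0..})" and t: "0 \<le> t"
  shows "g t = g 0"
proof -
  have "g t \<le> g 0" by (rule DERIV_nonpos_imp_antimono_nonneg[of g "\<lambda>_. 0"]) (use d t in auto)
  moreover have "- g t \<le> - g 0"
    by (rule DERIV_nonpos_imp_antimono_nonneg[of _ "\<lambda>_. 0"])
      (use d t in \<open>auto intro: DERIV_minus[where D = 0, simplified]\<close>)
  ultimately show ?thesis by simp
qed

lemma exp_neg_tendsto_0:
  assumes "0 < (\<kappa> :: real)"
  shows "((\<lambda>t. exp (- \<kappa> * t)) \<longlongrightarrow> 0) at_top"
proof -
  have "filterlim (\<lambda>t::real. - \<kappa> * t) at_bot at_top"
    by (rule filterlim_tendsto_neg_mult_at_bot[OF tendsto_const]) (use assms in \<open>auto simp: filterlim_ident\<close>)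
  then show ?thesis by (rule filterlim_compose[OF exp_at_bot])
qed

lemma differential_inequality_exp_decay:
  fixes f f' :: "real \<Rightarrow> real"
  assumes d: "\<And>t. 0 \<le> t \<Longrightarrow> (f has_real_derivative f' t) (at t within {0..})"
    and le: "\<And>t. 0 \<le> t \<Longrightarrow> f' t \<le> - \<kappa> * f t" and t: "0 \<le> t"
  shows "f t \<le> exp (- \<kappa> * t) * f 0"
proof -
  define g where "g t = exp (\<kappa> * t) * f t" for t
  have dg: "(g has_real_derivative exp (\<kappa> * t) * (\<kappa> * f t + f' t)) (at t within {0..})"
    if "0 \<le> t" for t
    unfolding g_def using d[OF that]
    by (auto intro!: derivative_eq_intros simp: algebra_simps)
  have "exp (\<kappa> * t) * (\<kappa> * f t + f' t) \<le> 0" if "0 \<le> t" for t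
    using le[OF that] by (simp add: mult_nonneg_nonpos)
  then have "g t \<le> g 0" by (intro DERIV_nonpos_imp_antimono_nonneg[OF dg]) (use t in auto)
  then have "exp (- \<kappa> * t) * (exp (\<kappa> * t) * f t) \<le> exp (- \<kappa> * t) * f 0"
    unfolding g_def by simp
  then show ?thesis by (simp add: mult.assoc[symmetric] exp_add[symmetric])
qed

text \<open>The rate \<open>\<beta> e\<^sup>-\<^sup>\<kappa>\<^sup>t\<close> has integral at most \<open>\<beta> / \<kappa>\<close> over \<open>[0, \<infinity>)\<close>.\<close>
lemma differential_inequality_bounded:
  fixes N N' :: "real \<Rightarrow> real"
  assumes d: "\<And>t. 0 \<le> t \<Longrightarrow> (N has_real_derivative N' t) (at t within {0..})"
    and le: "\<And>t. 0 \<le> t \<Longrightarrow> N' t \<le> \<beta> * exp (- \<kappa> * t) * N t"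
    and N: "\<And>t. 0 \<le> N t" and \<kappa>: "0 < \<kappa>" and \<beta>: "0 \<le> \<beta>" and t: "0 \<le> t"
  shows "N t \<le> exp (\<beta> / \<kappa>) * N 0"
proof -
  define \<phi> where "\<phi> t = \<beta> / \<kappa> * exp (- \<kappa> * t)" for t
  define \<psi> where "\<psi> t = exp (\<phi> t) * N t" for t
  have d\<psi>: "(\<psi> has_real_derivative exp (\<phi> t) * (N' t - \<beta> * exp (- \<kappa> * t) * N t)) (at t within {0..})"
    if "0 \<le> t" for t
    unfolding \<psi>_def \<phi>_def using d[OF that] \<kappa>
    by (auto intro!: derivative_eq_intros simp: algebra_simps)
  have "exp (\<phi> t) * (N' t - \<beta> * exp (- \<kappa> * t) * N t) \<le> 0" if "0 \<le> t" for t
    using le[OF that] by (simp add: mult_nonneg_nonpos)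
  then have "\<psi> t \<le> \<psi> 0" by (intro DERIV_nonpos_imp_antimono_nonneg[OF d\<psi>]) (use t in auto)
  moreover have "N t \<le> \<psi> t"
    unfolding \<psi>_def \<phi>_def using N[of t] \<kappa> \<beta> by (simp add: mult_le_cancel_right1)
  ultimately show ?thesis unfolding \<psi>_def \<phi>_def by simp
qed

text \<open>A function whose derivative is bounded by \<open>B e\<^sup>-\<^sup>\<kappa>\<^sup>t\<close> converges: \<open>w \<plusminus> (B/\<kappa>) e\<^sup>-\<^sup>\<kappa>\<^sup>t\<close>
  are monotone and sandwich \<open>w\<close>.\<close>
lemma exp_bounded_derivative_imp_convergent:
  fixes w w' :: "real \<Rightarrow> real"
  assumes d: "\<And>t. 0 \<le> t \<Longrightarrow> (w has_real_derivative w' t) (at t within {0..})"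
    and bnd: "\<And>t. 0 \<le> t \<Longrightarrow> \<bar>w' t\<bar> \<le> B * exp (- \<kappa> * t)" and \<kappa>: "0 < \<kappa>"
  obtains l where "(w \<longlongrightarrow> l) at_top"
proof -
  define c where "c = B / \<kappa>"
  have c: "0 \<le> c" unfolding c_def using bnd[of 0] \<kappa> by simp
  define g where "g t = w t + c * exp (- \<kappa> * t)" for t
  define h where "h t = w t - c * exp (- \<kappa> * t)" for t
  have dg: "(g has_real_derivative w' t - B * exp (- \<kappa> * t)) (at t within {0..})" if "0 \<le> t" for t
    unfolding g_def c_def using d[OF that] \<kappa> by (auto intro!: derivative_eq_intros)
  have dh: "((\<lambda>t. - h t) has_real_derivative - (w' t + B * exp (- \<kappa> * t))) (at t within {0..})"
    if "0 \<le> t" for t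
    unfolding h_def c_def using d[OF that] \<kappa> by (auto intro!: derivative_eq_intros)
  have g_anti: "g b \<le> g a" if "0 \<le> a" "a \<le> b" for a b
    by (rule DERIV_nonpos_imp_antimono_nonneg[OF dg]) (use bnd that in \<open>auto simp: abs_le_iff\<close>)
  have h_mono: "h 0 \<le> h t" if "0 \<le> t" for t
    using DERIV_nonpos_imp_antimono_nonneg[OF dh, of 0 t] bnd that by (force simp: abs_le_iff)
  have g_lower: "h 0 \<le> g t" if "0 \<le> t" for t
    using h_mono[OF that] c unfolding g_def h_def by (smt (verit) exp_ge_zero mult_nonneg_nonneg)
  define l where "l = (INF t\<in>{0..}. g t)"
  have bdd: "bdd_below (g ` {0..})" using g_lower by (auto intro!: bdd_belowI[of _ "h 0"])
  have gl: "(g \<longlongrightarrow> l) at_top"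
  proof (rule decreasing_tendsto)
    show "\<forall>\<^sub>F t in at_top. l \<le> g t"
      unfolding l_def eventually_at_top_linorder by (auto intro!: exI[of _ 0] cINF_lower[OF bdd])
  next
    fix x assume "l < x"
    then obtain t0 where t0: "t0 \<in> {0..}" "g t0 < x"
      unfolding l_def using cINF_less_iff[OF _ bdd] by blast
    show "\<forall>\<^sub>F t in at_top. g t < x"
      unfolding eventually_at_top_linorder
      by (rule exI[of _ t0]) (use t0 g_anti in \<open>auto intro: le_less_trans\<close>)
  qed
  have "((\<lambda>t. g t - c * exp (- \<kappa> * t)) \<longlongrightarrow> l - c * 0) at_top"
    by (intro tendsto_intros gl exp_neg_tendsto_0 \<kappa>)
  then have "(w \<longlongrightarrow> l) at_top" unfolding g_def by simp
  then show ?thesis by (rule that)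
qed

section \<open>The loss in SVD coordinates\<close>

lemma append_cols_carrier:
  "A \<in> carrier_mat n a \<Longrightarrow> B \<in> carrier_mat n b \<Longrightarrow> append_cols A B \<in> carrier_mat n (a + b)"
  unfolding append_cols_def by auto

lemma append_cols_index:
  "A \<in> carrier_mat n a \<Longrightarrow> B \<in> carrier_mat n b \<Longrightarrow> i < n \<Longrightarrow> j < a + b \<Longrightarrow>
    append_cols A B $$ (i,j) = (if j < a then A $$ (i,j) else B $$ (i, j - a))"
  unfolding append_cols_def by auto

lemma orthogonal_append_cols:
  assumes P1: "P1 \<in> carrier_mat D r" and P2: "P2 \<in> carrier_mat D k"
    and orth: "(append_cols P1 P2)\<^sup>T * append_cols P1 P2 = 1\<^sub>m (r + k)"
  shows "P1\<^sup>T * P1 = 1\<^sub>m r" and "P1\<^sup>T * P2 = 0\<^sub>m r k"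
proof -
  define P where "P = append_cols P1 P2"
  have P: "P \<in> carrier_mat D (r + k)" unfolding P_def by (rule append_cols_carrier[OF P1 P2])
  have PTP: "(\<Sum>l<D. P $$ (l,a) * P $$ (l,b)) = (if a = b then 1 else 0)"
    if "a < r + k" "b < r + k" for a b
    using transpose_mult_index[OF P P that] orth that unfolding P_def[symmetric] by simp
  have P1P: "P1 $$ (l,a) = P $$ (l,a)" if "l < D" "a < r" for l a
    unfolding P_def using append_cols_index[OF P1 P2] that by simp
  have P2P: "P2 $$ (l,b) = P $$ (l,r + b)" if "l < D" "b < k" for l b
    unfolding P_def using append_cols_index[OF P1 P2] that by simp
  show "P1\<^sup>T * P1 = 1\<^sub>m r"
  proof (rule eq_matI)
    fix a b assume "a < dim_row (1\<^sub>m r :: real mat)" "b < dim_col (1\<^sub>m r :: real mat)"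
    then have ab: "a < r" "b < r" by auto
    show "(P1\<^sup>T * P1) $$ (a,b) = 1\<^sub>m r $$ (a,b)"
      using transpose_mult_index[OF P1 P1 ab] PTP[of a b] P1P ab by simp
  qed (use P1 in auto)
  show "P1\<^sup>T * P2 = 0\<^sub>m r k"
  proof (rule eq_matI)
    fix a b assume "a < dim_row (0\<^sub>m r k :: real mat)" "b < dim_col (0\<^sub>m r k :: real mat)"
    then have ab: "a < r" "b < k" by auto
    show "(P1\<^sup>T * P2) $$ (a,b) = 0\<^sub>m r k $$ (a,b)"
      using transpose_mult_index[OF P1 P2 ab] PTP[of a "r + b"] P1P P2P ab by simp
  qed (use P1 P2 in auto)
qed

lemma append_cols_zero_mult_transpose:
  fixes S P1 P2 :: "real mat"
  assumes S: "S \<in> carrier_mat r r" and P1: "P1 \<in> carrier_mat D r" and P2: "P2 \<in> carrier_mat D k"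
  shows "append_cols S (0\<^sub>m r k) * (append_cols P1 P2)\<^sup>T = S * P1\<^sup>T"
proof (rule eq_matI)
  fix i l assume "i < dim_row (S * P1\<^sup>T)" "l < dim_col (S * P1\<^sup>T)"
  then have il: "i < r" "l < D" using S P1 by auto
  have Z: "append_cols S (0\<^sub>m r k) $$ (i,b) = (if b < r then S $$ (i,b) else 0)"
    if "b < r + k" for b
    using append_cols_index[OF S, of "0\<^sub>m r k" k i b] il that by simp
  have P: "(append_cols P1 P2)\<^sup>T $$ (b,l) = (if b < r then P1 $$ (l,b) else P2 $$ (l, b - r))"
    if "b < r + k" for b
    using append_cols_carrier[OF P1 P2] append_cols_index[OF P1 P2, of l b] il that by simp
  have "(append_cols S (0\<^sub>m r k) * (append_cols P1 P2)\<^sup>T) $$ (i,l)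
      = (\<Sum>b<r + k. append_cols S (0\<^sub>m r k) $$ (i,b) * (append_cols P1 P2)\<^sup>T $$ (b,l))"
    by (rule index_mult_mat_sum) (use il append_cols_carrier[OF S, of "0\<^sub>m r k" k]
        append_cols_carrier[OF P1 P2] in auto)
  also have "\<dots> = (\<Sum>b<r + k. (if b < r then S $$ (i,b) * P1 $$ (l,b) else 0))"
    by (intro sum.cong refl) (simp add: Z P)
  also have "\<dots> = (\<Sum>b<r. S $$ (i,b) * P1 $$ (l,b))"
    by (rule sum.mono_neutral_cong_right) auto
  also have "\<dots> = (S * P1\<^sup>T) $$ (i,l)"
    using S P1 il by (simp add: index_mult_mat_sum[of _ r r _ D] del: index_mult_mat)
  finally show "(append_cols S (0\<^sub>m r k) * (append_cols P1 P2)\<^sup>T) $$ (i,l) = (S * P1\<^sup>T) $$ (i,l)" .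
qed (use S P1 P2 append_cols_carrier[OF S, of "0\<^sub>m r k" k] append_cols_carrier[OF P1 P2] in auto)

lemma svd_mult_coordinates:
  fixes X W S P1 P2 U U2 :: "real mat"
  assumes W: "W \<in> carrier_mat n r" and S: "S \<in> carrier_mat r r"
    and P1: "P1 \<in> carrier_mat D r" and P2: "P2 \<in> carrier_mat D k"
    and orth: "(append_cols P1 P2)\<^sup>T * append_cols P1 P2 = 1\<^sub>m (r + k)"
    and X: "X = W * append_cols S (0\<^sub>m r k) * (append_cols P1 P2)\<^sup>T"
    and U: "U \<in> carrier_mat r h" and U2: "U2 \<in> carrier_mat k h"
  shows "X * (P1 * U + P2 * U2) = W * S * U"
proof -
  note PTP = orthogonal_append_cols[OF P1 P2 orth]
  have Z: "append_cols S (0\<^sub>m r k) \<in> carrier_mat r (r + k)" by (rule append_cols_carrier[OF S]) simp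
  have "X = W * (append_cols S (0\<^sub>m r k) * (append_cols P1 P2)\<^sup>T)"
    unfolding X by (rule assoc_mult_mat) (use W Z append_cols_carrier[OF P1 P2] in auto)
  also have "\<dots> = W * (S * P1\<^sup>T)" by (simp only: append_cols_zero_mult_transpose[OF S P1 P2])
  also have "\<dots> = W * S * P1\<^sup>T" by (rule assoc_mult_mat[symmetric]) (use W S P1 in auto)
  finally have X': "X = W * S * P1\<^sup>T" .
  have "X * (P1 * U + P2 * U2) = W * S * (P1\<^sup>T * (P1 * U + P2 * U2))"
    unfolding X' by (rule assoc_mult_mat) (use W S P1 P2 U U2 in auto)
  also have "P1\<^sup>T * (P1 * U + P2 * U2) = P1\<^sup>T * (P1 * U) + P1\<^sup>T * (P2 * U2)"
    by (rule mult_add_distrib_mat) (use P1 P2 U U2 in auto)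
  also have "\<dots> = (P1\<^sup>T * P1) * U + (P1\<^sup>T * P2) * U2"
    using P1 P2 U U2 by (simp add: assoc_mult_mat[of _ r D _ r _ h] assoc_mult_mat[of _ r D _ k _ h])
  also have "\<dots> = U" using PTP U U2 by simp
  finally show ?thesis .
qed

definition frob_inner :: "real mat \<Rightarrow> real mat \<Rightarrow> real" where
  "frob_inner A B = (\<Sum>i<dim_row A. \<Sum>j<dim_col A. A $$ (i,j) * B $$ (i,j))"

lemma frob_sq_eq_frob_inner: "frob_sq A = frob_inner A A"
  unfolding frob_sq_def frob_inner_def by (simp add: power2_eq_square)

lemma frob_inner_mult_right:
  fixes A W E :: "real mat"
  assumes A: "A \<in> carrier_mat n m" and W: "W \<in> carrier_mat n r" and E: "E \<in> carrier_mat r m"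
  shows "frob_inner A (W * E) = frob_inner (W\<^sup>T * A) E"
proof -
  have "frob_inner A (W * E) = (\<Sum>a<n. \<Sum>j<m. A $$ (a,j) * (\<Sum>i<r. W $$ (a,i) * E $$ (i,j)))"
    unfolding frob_inner_def using A W E by (simp add: index_mult_mat_sum[OF W E] del: index_mult_mat)
  also have "\<dots> = (\<Sum>a<n. \<Sum>j<m. \<Sum>i<r. A $$ (a,j) * W $$ (a,i) * E $$ (i,j))"
    by (simp add: sum_distrib_left mult_ac)
  also have "\<dots> = (\<Sum>j<m. \<Sum>a<n. \<Sum>i<r. A $$ (a,j) * W $$ (a,i) * E $$ (i,j))"
    by (rule sum.swap)
  also have "\<dots> = (\<Sum>j<m. \<Sum>i<r. \<Sum>a<n. A $$ (a,j) * W $$ (a,i) * E $$ (i,j))"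
    by (intro sum.cong refl sum.swap)
  also have "\<dots> = (\<Sum>i<r. \<Sum>j<m. \<Sum>a<n. A $$ (a,j) * W $$ (a,i) * E $$ (i,j))"
    by (rule sum.swap)
  also have "\<dots> = frob_inner (W\<^sup>T * A) E"
    unfolding frob_inner_def using A W
    by (simp add: index_mult_mat_sum[of _ r n _ m] sum_distrib_left mult_ac del: index_mult_mat(1))
  finally show ?thesis .
qed

lemma frob_sq_add:
  fixes A B :: "real mat"
  assumes A: "A \<in> carrier_mat n m" and B: "B \<in> carrier_mat n m"
  shows "frob_sq (A + B) = frob_sq A + 2 * frob_inner A B + frob_sq B"
  unfolding frob_sq_def frob_inner_def using A B
  by (simp add: power2_sum sum.distrib sum_distrib_left mult.assoc)

lemma frob_sq_add_orthogonal:
  fixes A W E :: "real mat"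
  assumes A: "A \<in> carrier_mat n m" and W: "W \<in> carrier_mat n r" and E: "E \<in> carrier_mat r m"
    and WTW: "W\<^sup>T * W = 1\<^sub>m r" and WTA: "W\<^sup>T * A = 0\<^sub>m r m"
  shows "frob_sq (A + W * E) = frob_sq A + frob_sq E"
proof -
  have "frob_inner A (W * E) = 0"
    unfolding frob_inner_mult_right[OF A W E] WTA unfolding frob_inner_def by simp
  moreover have "frob_sq (W * E) = frob_sq E"
  proof -
    have "frob_sq (W * E) = frob_inner (W\<^sup>T * (W * E)) E"
      unfolding frob_sq_eq_frob_inner by (rule frob_inner_mult_right) (use W E in auto)
    also have "W\<^sup>T * (W * E) = E"
      using W E WTW by (simp add: assoc_mult_mat[of _ r n _ r _ m, symmetric])
    finally show ?thesis by (simp add: frob_sq_eq_frob_inner)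
  qed
  ultimately show ?thesis using frob_sq_add[of A n m "W * E"] A W E by simp
qed

lemma diag_sqrt_carrier: "S \<in> carrier_mat r r \<Longrightarrow> diag_sqrt S \<in> carrier_mat r r"
  unfolding diag_sqrt_def by auto

lemma err_carrier:
  assumes "W \<in> carrier_mat n r" "Y \<in> carrier_mat n m" "Sx \<in> carrier_mat r r"
    and "V \<in> carrier_mat m h" "U \<in> carrier_mat r h"
  shows "err W Y Sx V U \<in> carrier_mat r m"
  unfolding err_def using assms diag_sqrt_carrier[OF assms(3)] by auto

text \<open>The residual splits into the part \<open>(I - W W\<^sup>T) Y\<close> orthogonal to the range of \<open>X\<close>
  and \<open>W\<close> times the error; hence the loss is \<open>\<L>\<^sup>* + \<parallel>E\<parallel>\<^sup>2/2\<close>.\<close>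
lemma loss_decomposition:
  fixes X Y W Sx Phi1 Phi2 U2 V U :: "real mat"
  assumes Y: "Y \<in> carrier_mat n m" and rD: "r \<le> D"
    and W: "W \<in> carrier_mat n r" and WTW: "W\<^sup>T * W = 1\<^sub>m r" and Sx: "Sx \<in> carrier_mat r r"
    and Phi1: "Phi1 \<in> carrier_mat D r" and Phi2: "Phi2 \<in> carrier_mat D (D - r)"
    and orth: "(append_cols Phi1 Phi2)\<^sup>T * append_cols Phi1 Phi2 = 1\<^sub>m D"
    and svd: "X = W * append_cols (diag_sqrt Sx) (0\<^sub>m r (D - r)) * (append_cols Phi1 Phi2)\<^sup>T"
    and U2: "U2 \<in> carrier_mat (D - r) h" and V: "V \<in> carrier_mat m h" and U: "U \<in> carrier_mat r h"
  shows "frob_sq (Y - X * (Phi1 * U + Phi2 * U2) * V\<^sup>T)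
       = frob_sq ((1\<^sub>m n - W * W\<^sup>T) * Y) + frob_sq (err W Y Sx V U)"
proof -
  define S where "S = diag_sqrt Sx"
  have S: "S \<in> carrier_mat r r" unfolding S_def by (rule diag_sqrt_carrier[OF Sx])
  have XU: "X * (Phi1 * U + Phi2 * U2) = W * S * U"
    using svd_mult_coordinates[OF W S Phi1 Phi2 _ _ U U2] orth svd rD unfolding S_def by simp
  define A where "A = (1\<^sub>m n - W * W\<^sup>T) * Y"
  have A: "A \<in> carrier_mat n m" unfolding A_def using W Y by auto
  have A': "A = Y - W * (W\<^sup>T * Y)"
    unfolding A_def using W Y by (simp add: minus_mult_distrib_mat[of _ n n] assoc_mult_mat[of _ n r _ n _ m])
  define E where "E = err W Y Sx V U"
  have E: "E \<in> carrier_mat r m" unfolding E_def by (rule err_carrier[OF W Y Sx V U])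
  define M where "M = S * U * V\<^sup>T"
  have M: "M \<in> carrier_mat r m" unfolding M_def using S U V by auto
  have "Y - X * (Phi1 * U + Phi2 * U2) * V\<^sup>T = Y - W * M"
    unfolding XU M_def using W S U V
    by (simp add: assoc_mult_mat[of _ n r _ r _ h] assoc_mult_mat[of _ n r _ h _ m])
  moreover have "W * E = W * (W\<^sup>T * Y) - W * M"
    unfolding E_def err_def S_def[symmetric] M_def[symmetric]
    by (rule mult_minus_distrib_mat) (use W Y M in auto)
  ultimately have "Y - X * (Phi1 * U + Phi2 * U2) * V\<^sup>T = A + W * E"
    unfolding A' using W Y M by (intro eq_matI) auto
  moreover have "W\<^sup>T * A = 0\<^sub>m r m"
  proof -
    have "W\<^sup>T * A = W\<^sup>T * Y - W\<^sup>T * (W * (W\<^sup>T * Y))"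
      unfolding A' by (rule mult_minus_distrib_mat) (use W Y in auto)
    also have "W\<^sup>T * (W * (W\<^sup>T * Y)) = (W\<^sup>T * W) * (W\<^sup>T * Y)"
      using W Y by (simp add: assoc_mult_mat[of _ r n _ r _ m])
    finally show ?thesis unfolding WTW using W Y by (intro eq_matI) auto
  qed
  ultimately show ?thesis
    using frob_sq_add_orthogonal[OF A W E WTW] unfolding A_def E_def by simp
qed

section \<open>The gradient flow\<close>

lemma diag_sqrt_mult_index:
  fixes S A :: "real mat"
  assumes S: "S \<in> carrier_mat r r" and A: "A \<in> carrier_mat r k" and i: "i < r" and j: "j < k"
  shows "(diag_sqrt S * A) $$ (i,j) = sqrt (S $$ (i,i)) * A $$ (i,j)"
proof -
  have "(diag_sqrt S * A) $$ (i,j) = (\<Sum>l<r. diag_sqrt S $$ (i,l) * A $$ (l,j))"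
    by (rule index_mult_mat_sum[OF diag_sqrt_carrier[OF S] A i j])
  also have "\<dots> = (\<Sum>l<r. if l = i then sqrt (S $$ (i,i)) * A $$ (l,j) else 0)"
    by (rule sum.cong) (use S i in \<open>auto simp: diag_sqrt_def\<close>)
  finally show ?thesis using i by simp
qed

lemma mult_diag_sqrt_index:
  fixes S A :: "real mat"
  assumes S: "S \<in> carrier_mat r r" and A: "A \<in> carrier_mat k r" and i: "i < k" and j: "j < r"
  shows "(A * diag_sqrt S) $$ (i,j) = A $$ (i,j) * sqrt (S $$ (j,j))"
proof -
  have "(A * diag_sqrt S) $$ (i,j) = (\<Sum>l<r. A $$ (i,l) * diag_sqrt S $$ (l,j))"
    by (rule index_mult_mat_sum[OF A diag_sqrt_carrier[OF S] i j])
  also have "\<dots> = (\<Sum>l<r. if l = j then A $$ (i,l) * sqrt (S $$ (j,j)) else 0)"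
    by (rule sum.cong) (use S j in \<open>auto simp: diag_sqrt_def\<close>)
  finally show ?thesis using j by simp
qed

lemma err_index:
  fixes W Y Sx V U :: "real mat"
  assumes W: "W \<in> carrier_mat n r" and Y: "Y \<in> carrier_mat n m" and Sx: "Sx \<in> carrier_mat r r"
    and V: "V \<in> carrier_mat m h" and U: "U \<in> carrier_mat r h" and i: "i < r" and j: "j < m"
  shows "err W Y Sx V U $$ (i,j)
       = (W\<^sup>T * Y) $$ (i,j) - sqrt (Sx $$ (i,i)) * (\<Sum>l<h. U $$ (i,l) * V $$ (j,l))"
proof -
  have SU: "diag_sqrt Sx * U \<in> carrier_mat r h" using diag_sqrt_carrier[OF Sx] U by auto
  have "(diag_sqrt Sx * U * V\<^sup>T) $$ (i,j) = (\<Sum>l<h. (diag_sqrt Sx * U) $$ (i,l) * V\<^sup>T $$ (l,j))"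
    by (rule index_mult_mat_sum[OF SU _ i j]) (use V in auto)
  also have "\<dots> = sqrt (Sx $$ (i,i)) * (\<Sum>l<h. U $$ (i,l) * V $$ (j,l))"
    unfolding sum_distrib_left
    by (rule sum.cong) (use diag_sqrt_mult_index[OF Sx U i] V j in auto)
  finally have prod: "(diag_sqrt Sx * U * V\<^sup>T) $$ (i,j)
      = sqrt (Sx $$ (i,i)) * (\<Sum>l<h. U $$ (i,l) * V $$ (j,l))" .
  have "diag_sqrt Sx * U * V\<^sup>T \<in> carrier_mat r m" using SU V by auto
  then have "err W Y Sx V U $$ (i,j) = (W\<^sup>T * Y) $$ (i,j) - (diag_sqrt Sx * U * V\<^sup>T) $$ (i,j)"
    unfolding err_def using i j by (metis index_minus_mat(1) carrier_matD(1,2))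
  then show ?thesis unfolding prod .
qed

lemma sum_bilinear_swap_left:
  fixes a b c :: "nat \<Rightarrow> nat \<Rightarrow> real"
  shows "(\<Sum>i<r. \<Sum>j<m. a i j * (\<Sum>l<h. b i l * c j l))
       = (\<Sum>i<r. \<Sum>l<h. b i l * (\<Sum>j<m. a i j * c j l))"
proof (rule sum.cong[OF refl])
  fix i
  have "(\<Sum>j<m. a i j * (\<Sum>l<h. b i l * c j l)) = (\<Sum>j<m. \<Sum>l<h. b i l * (a i j * c j l))"
    by (simp add: sum_distrib_left mult_ac)
  also have "\<dots> = (\<Sum>l<h. b i l * (\<Sum>j<m. a i j * c j l))"
    by (subst sum.swap) (simp add: sum_distrib_left)
  finally show "(\<Sum>j<m. a i j * (\<Sum>l<h. b i l * c j l)) = (\<Sum>l<h. b i l * (\<Sum>j<m. a i j * c j l))" .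
qed

lemma sum_bilinear_swap_right:
  fixes a b c :: "nat \<Rightarrow> nat \<Rightarrow> real"
  shows "(\<Sum>i<r. \<Sum>j<m. a i j * (\<Sum>l<h. b i l * c j l))
       = (\<Sum>j<m. \<Sum>l<h. c j l * (\<Sum>i<r. a i j * b i l))"
proof -
  have "(\<Sum>i<r. \<Sum>j<m. a i j * (\<Sum>l<h. b i l * c j l))
      = (\<Sum>j<m. \<Sum>i<r. a i j * (\<Sum>l<h. b i l * c j l))" by (rule sum.swap)
  also have "\<dots> = (\<Sum>j<m. \<Sum>l<h. c j l * (\<Sum>i<r. a i j * b i l))"
  proof (rule sum.cong[OF refl])
    fix j
    have "(\<Sum>i<r. a i j * (\<Sum>l<h. b i l * c j l)) = (\<Sum>i<r. \<Sum>l<h. c j l * (a i j * b i l))"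
      by (simp add: sum_distrib_left mult_ac)
    also have "\<dots> = (\<Sum>l<h. c j l * (\<Sum>i<r. a i j * b i l))"
      by (subst sum.swap) (simp add: sum_distrib_left)
    finally show "(\<Sum>i<r. a i j * (\<Sum>l<h. b i l * c j l)) = (\<Sum>l<h. c j l * (\<Sum>i<r. a i j * b i l))" .
  qed
  finally show ?thesis .
qed

lemma lam_gram_diff_lower_bound_sum:
  fixes A B :: "real mat"
  assumes A: "A \<in> carrier_mat p h" and B: "B \<in> carrier_mat q h"
    and pos: "0 < lam (A\<^sup>T * A - B\<^sup>T * B) p"
  shows "lam (A\<^sup>T * A - B\<^sup>T * B) p * (\<Sum>i<p. (x i)\<^sup>2) \<le> (\<Sum>k<h. (\<Sum>i<p. A $$ (i,k) * x i)\<^sup>2)"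
proof -
  have xv: "vec p x \<in> carrier_vec p" by simp
  have "vec p x \<bullet> vec p x = (\<Sum>i<p. (x i)\<^sup>2)"
    by (simp add: scalar_prod_def atLeast0LessThan power2_eq_square)
  moreover have "(A\<^sup>T *\<^sub>v vec p x) \<bullet> (A\<^sup>T *\<^sub>v vec p x) = (\<Sum>k<h. (\<Sum>i<p. A $$ (i,k) * x i)\<^sup>2)"
    using A by (simp add: scalar_prod_def atLeast0LessThan power2_eq_square)
  ultimately show ?thesis using lam_gram_diff_lower_bound[OF A B pos xv] by simp
qed

lemma abs_le_sqrt_double_sum_squares:
  fixes f :: "nat \<Rightarrow> nat \<Rightarrow> real"
  assumes "i < p" and "j < q" and "(\<Sum>i<p. \<Sum>j<q. (f i j)\<^sup>2) \<le> S"
  shows "\<bar>f i j\<bar> \<le> sqrt S"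
proof -
  have "(f i j)\<^sup>2 \<le> (\<Sum>j<q. (f i j)\<^sup>2)" by (rule member_le_sum) (use assms in auto)
  also have "\<dots> \<le> (\<Sum>i<p. \<Sum>j<q. (f i j)\<^sup>2)"
    by (rule member_le_sum[of i "{..<p}" "\<lambda>i. \<Sum>j<q. (f i j)\<^sup>2"]) (use assms in \<open>auto intro: sum_nonneg\<close>)
  finally have "\<bar>f i j\<bar>\<^sup>2 \<le> S" using assms(3) by simp
  then show ?thesis by (rule real_le_rsqrt)
qed

locale factored_gradient_flow =
  fixes W Y Sx :: "real mat" and V U1 :: "real \<Rightarrow> real mat" and n r m h :: nat
  assumes W: "W \<in> carrier_mat n r" and Y: "Y \<in> carrier_mat n m"
    and Sx: "Sx \<in> carrier_mat r r" and Sx_diag: "diagonal_mat Sx" and Sx_pos: "\<forall>i<r. Sx $$ (i,i) > 0"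
    and V_carrier: "\<forall>t\<ge>0. V t \<in> carrier_mat m h" and U1_carrier: "\<forall>t\<ge>0. U1 t \<in> carrier_mat r h"
    and V_ode: "\<forall>t\<ge>0. mat_has_deriv V
                 ((err W Y Sx (V t) (U1 t))\<^sup>T * diag_sqrt Sx * U1 t) (at t within {0..})"
    and U1_ode: "\<forall>t\<ge>0. mat_has_deriv U1
                 (diag_sqrt Sx * err W Y Sx (V t) (U1 t) * V t) (at t within {0..})"
begin

text \<open>Entrywise coordinates: \<open>\<sigma> i\<close> is the \<open>i\<close>-th diagonal entry of \<open>\<Sigma>\<^sub>x\<^sup>1\<^sup>/\<^sup>2\<close>, \<open>e\<close> the error
  matrix, \<open>du\<close> and \<open>dv\<close> the right-hand sides of the flow, \<open>gap t = 2 (\<L>(t) - \<L>\<^sup>*)\<close>,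
  and \<open>rate\<close> is the constant \<open>c\<close>.\<close>
definition \<sigma> :: "nat \<Rightarrow> real" where "\<sigma> i = sqrt (Sx $$ (i,i))"
definition u :: "nat \<Rightarrow> nat \<Rightarrow> real \<Rightarrow> real" where "u i k t = U1 t $$ (i,k)"
definition v :: "nat \<Rightarrow> nat \<Rightarrow> real \<Rightarrow> real" where "v j k t = V t $$ (j,k)"
definition e :: "nat \<Rightarrow> nat \<Rightarrow> real \<Rightarrow> real" where
  "e i j t = (W\<^sup>T * Y) $$ (i,j) - \<sigma> i * (\<Sum>l<h. u i l t * v j l t)"
definition du :: "nat \<Rightarrow> nat \<Rightarrow> real \<Rightarrow> real" where "du i k t = \<sigma> i * (\<Sum>j<m. e i j t * v j k t)"
definition dv :: "nat \<Rightarrow> nat \<Rightarrow> real \<Rightarrow> real" where "dv j k t = (\<Sum>i<r. e i j t * \<sigma> i * u i k t)"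
definition gap :: "real \<Rightarrow> real" where "gap t = (\<Sum>i<r. \<Sum>j<m. (e i j t)\<^sup>2)"
definition dissipation :: "real \<Rightarrow> real" where
  "dissipation t = (\<Sum>i<r. \<Sum>k<h. (du i k t)\<^sup>2) + (\<Sum>j<m. \<Sum>k<h. (dv j k t)\<^sup>2)"
definition imbalance :: "real \<Rightarrow> real mat" where "imbalance t = (U1 t)\<^sup>T * U1 t - (V t)\<^sup>T * V t"
definition rate :: real where
  "rate = (if h < r then 0 else pos_part (lam (imbalance 0) r))
        + (if h < m then 0 else pos_part (lam (- imbalance 0) m))"

lemma V_carrier_nonneg: "0 \<le> t \<Longrightarrow> V t \<in> carrier_mat m h"
  using V_carrier by blast

lemma U1_carrier_nonneg: "0 \<le> t \<Longrightarrow> U1 t \<in> carrier_mat r h"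
  using U1_carrier by blast

lemma err_flow_carrier: "0 \<le> t \<Longrightarrow> err W Y Sx (V t) (U1 t) \<in> carrier_mat r m"
  by (rule err_carrier[OF W Y Sx V_carrier_nonneg U1_carrier_nonneg])

lemma err_flow_index: "0 \<le> t \<Longrightarrow> i < r \<Longrightarrow> j < m \<Longrightarrow> err W Y Sx (V t) (U1 t) $$ (i,j) = e i j t"
  unfolding e_def \<sigma>_def u_def v_def
  by (rule err_index[OF W Y Sx V_carrier_nonneg U1_carrier_nonneg])

lemma gap_eq_frob_sq_err:
  assumes "0 \<le> t"
  shows "frob_sq (err W Y Sx (V t) (U1 t)) = gap t"
  unfolding frob_sq_def gap_def using err_flow_carrier[OF assms] err_flow_index[OF assms] by simp

lemma gap_nonneg: "0 \<le> gap t"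
  unfolding gap_def by (intro sum_nonneg) auto

lemma \<sigma>_nonneg: "i < r \<Longrightarrow> 0 \<le> \<sigma> i"
  unfolding \<sigma>_def using Sx_pos by (simp add: less_imp_le)

lemma has_deriv_u:
  assumes "i < r" "k < h" "0 \<le> t"
  shows "((\<lambda>t. u i k t) has_real_derivative du i k t) (at t within {0..})"
proof -
  define M where "M = diag_sqrt Sx * err W Y Sx (V t) (U1 t) * V t"
  have SE: "diag_sqrt Sx * err W Y Sx (V t) (U1 t) \<in> carrier_mat r m"
    using diag_sqrt_carrier[OF Sx] err_flow_carrier[OF assms(3)] by auto
  have M: "M \<in> carrier_mat r h" unfolding M_def using SE V_carrier_nonneg[OF assms(3)] by auto
  have "M $$ (i,k) = (\<Sum>j<m. (diag_sqrt Sx * err W Y Sx (V t) (U1 t)) $$ (i,j) * V t $$ (j,k))"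
    unfolding M_def by (rule index_mult_mat_sum[OF SE V_carrier_nonneg]) (use assms in auto)
  also have "\<dots> = du i k t"
    unfolding du_def sum_distrib_left
    by (rule sum.cong) (use assms diag_sqrt_mult_index[OF Sx err_flow_carrier] err_flow_index
        in \<open>auto simp: \<sigma>_def v_def\<close>)
  finally have Mik: "M $$ (i,k) = du i k t" .
  have "mat_has_deriv U1 M (at t within {0..})" using U1_ode assms(3) unfolding M_def by blast
  then show ?thesis using M assms unfolding mat_has_deriv_def u_def Mik[symmetric] by auto
qed

lemma has_deriv_v:
  assumes "j < m" "k < h" "0 \<le> t"
  shows "((\<lambda>t. v j k t) has_real_derivative dv j k t) (at t within {0..})"
proof -
  define M where "M = (err W Y Sx (V t) (U1 t))\<^sup>T * diag_sqrt Sx * U1 t"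
  have ET: "(err W Y Sx (V t) (U1 t))\<^sup>T \<in> carrier_mat m r" using err_flow_carrier[OF assms(3)] by auto
  have ES: "(err W Y Sx (V t) (U1 t))\<^sup>T * diag_sqrt Sx \<in> carrier_mat m r"
    using diag_sqrt_carrier[OF Sx] ET by auto
  have M: "M \<in> carrier_mat m h" unfolding M_def using ES U1_carrier_nonneg[OF assms(3)] by auto
  have "M $$ (j,k) = (\<Sum>i<r. ((err W Y Sx (V t) (U1 t))\<^sup>T * diag_sqrt Sx) $$ (j,i) * U1 t $$ (i,k))"
    unfolding M_def by (rule index_mult_mat_sum[OF ES U1_carrier_nonneg]) (use assms in auto)
  also have "\<dots> = dv j k t"
    unfolding dv_def
  proof (rule sum.cong[OF refl])
    fix i assume i: "i \<in> {..<r}"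
    have "(err W Y Sx (V t) (U1 t))\<^sup>T $$ (j,i) = e i j t"
      using err_flow_carrier[OF assms(3)] err_flow_index[OF assms(3), of i j] i assms by auto
    then show "((err W Y Sx (V t) (U1 t))\<^sup>T * diag_sqrt Sx) $$ (j,i) * U1 t $$ (i,k) = e i j t * \<sigma> i * u i k t"
      using mult_diag_sqrt_index[OF Sx ET, of j i] i assms unfolding \<sigma>_def u_def by simp
  qed
  finally have Mjk: "M $$ (j,k) = dv j k t" .
  have "mat_has_deriv V M (at t within {0..})" using V_ode assms(3) unfolding M_def by blast
  then show ?thesis using M assms unfolding mat_has_deriv_def v_def Mjk[symmetric] by auto
qed

lemma has_deriv_e:
  assumes "i < r" "j < m" "0 \<le> t"
  shows "((\<lambda>t. e i j t) has_real_derivative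
           - \<sigma> i * (\<Sum>l<h. du i l t * v j l t + u i l t * dv j l t)) (at t within {0..})"
  unfolding e_def using assms
  by (auto intro!: derivative_eq_intros has_deriv_u has_deriv_v simp: ac_simps)

text \<open>The flow is the gradient flow of \<open>gap / 2\<close>, so \<open>gap\<close> decreases at twice the squared
  speed.\<close>
lemma has_deriv_gap:
  assumes t: "0 \<le> t"
  shows "(gap has_real_derivative - 2 * dissipation t) (at t within {0..})"
proof -
  define a where "a i j = (e i j t * \<sigma> i) * (\<Sum>l<h. du i l t * v j l t)" for i j
  define b where "b i j = (e i j t * \<sigma> i) * (\<Sum>l<h. u i l t * dv j l t)" for i j
  have "(gap has_real_derivative (\<Sum>i<r. \<Sum>j<m. - 2 * (a i j + b i j))) (at t within {0..})"
    unfolding gap_def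
  proof (intro DERIV_sum)
    fix i j assume "i \<in> {..<r}" "j \<in> {..<m}"
    then show "((\<lambda>t. (e i j t)\<^sup>2) has_real_derivative - 2 * (a i j + b i j)) (at t within {0..})"
      using DERIV_power[OF has_deriv_e, of i j t 2] t
      unfolding a_def b_def by (simp add: sum.distrib algebra_simps)
  qed
  moreover have "(\<Sum>i<r. \<Sum>j<m. - 2 * (a i j + b i j)) = - 2 * (\<Sum>i<r. \<Sum>j<m. a i j + b i j)"
    by (simp only: sum_distrib_left)
  moreover have "(\<Sum>i<r. \<Sum>j<m. a i j + b i j) = (\<Sum>i<r. (\<Sum>j<m. a i j) + (\<Sum>j<m. b i j))"
    by (rule sum.cong[OF refl]) (rule sum.distrib)
  moreover have "\<dots> = (\<Sum>i<r. \<Sum>j<m. a i j) + (\<Sum>i<r. \<Sum>j<m. b i j)"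
    by (rule sum.distrib)
  moreover have "(\<Sum>i<r. \<Sum>j<m. a i j) = (\<Sum>i<r. \<Sum>k<h. (du i k t)\<^sup>2)"
  proof -
    have "(\<Sum>j<m. (e i j t * \<sigma> i) * v j k t) = du i k t" for i k
      unfolding du_def by (simp add: sum_distrib_left mult_ac)
    then show ?thesis unfolding a_def by (subst sum_bilinear_swap_left) (simp add: power2_eq_square)
  qed
  moreover have "(\<Sum>i<r. \<Sum>j<m. b i j) = (\<Sum>j<m. \<Sum>k<h. (dv j k t)\<^sup>2)"
  proof -
    have "(\<Sum>i<r. (e i j t * \<sigma> i) * u i k t) = dv j k t" for j k
      unfolding dv_def by simp
    then show ?thesis unfolding b_def by (subst sum_bilinear_swap_right) (simp add: power2_eq_square)
  qed
  ultimately show ?thesis unfolding dissipation_def by simp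
qed

lemma imbalance_carrier: "0 \<le> t \<Longrightarrow> imbalance t \<in> carrier_mat h h"
  unfolding imbalance_def using U1_carrier_nonneg V_carrier_nonneg by fastforce

lemma imbalance_index:
  assumes t: "0 \<le> t" and k: "k < h" and l: "l < h"
  shows "imbalance t $$ (k,l) = (\<Sum>i<r. u i k t * u i l t) - (\<Sum>j<m. v j k t * v j l t)"
proof -
  have "imbalance t $$ (k,l) = ((U1 t)\<^sup>T * U1 t) $$ (k,l) - ((V t)\<^sup>T * V t) $$ (k,l)"
    unfolding imbalance_def using V_carrier_nonneg[OF t] k l
    by (metis carrier_matD(1,2) index_minus_mat(1) index_mult_mat(2,3) index_transpose_mat(2))
  then show ?thesis unfolding u_def v_def
    using transpose_mult_index[OF U1_carrier_nonneg[OF t] U1_carrier_nonneg[OF t] k l]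
      transpose_mult_index[OF V_carrier_nonneg[OF t] V_carrier_nonneg[OF t] k l] by simp
qed

lemma sum_du_mult_u: "(\<Sum>i<r. du i k t * u i l t) = (\<Sum>j<m. v j k t * dv j l t)"
proof -
  have "(\<Sum>i<r. du i k t * u i l t) = (\<Sum>i<r. \<Sum>j<m. v j k t * (e i j t * \<sigma> i * u i l t))"
    unfolding du_def by (simp add: sum_distrib_left sum_distrib_right mult_ac)
  also have "\<dots> = (\<Sum>j<m. \<Sum>i<r. v j k t * (e i j t * \<sigma> i * u i l t))" by (rule sum.swap)
  also have "\<dots> = (\<Sum>j<m. v j k t * dv j l t)" unfolding dv_def by (simp add: sum_distrib_left)
  finally show ?thesis .
qed

text \<open>With \<open>G = \<Sigma>\<^sub>x\<^sup>1\<^sup>/\<^sup>2 E\<close>, both \<open>U\<^sub>1\<^sup>T U\<^sub>1\<close> and \<open>V\<^sup>T V\<close> move at the rate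
  \<open>U\<^sub>1\<^sup>T G V + V\<^sup>T G\<^sup>T U\<^sub>1\<close>.\<close>
lemma imbalance_const:
  assumes t: "0 \<le> t"
  shows "imbalance t = imbalance 0"
proof (rule eq_matI)
  fix k l assume "k < dim_row (imbalance 0)" "l < dim_col (imbalance 0)"
  then have k: "k < h" and l: "l < h" using imbalance_carrier[of 0] by auto
  define P where "P t = (\<Sum>i<r. u i k t * u i l t) - (\<Sum>j<m. v j k t * v j l t)" for t
  have "(P has_real_derivative 0) (at s within {0..})" if "0 \<le> s" for s
  proof -
    have "(P has_real_derivative (\<Sum>i<r. du i k s * u i l s + u i k s * du i l s)
        - (\<Sum>j<m. dv j k s * v j l s + v j k s * dv j l s)) (at s within {0..})"
      unfolding P_def using k l that
      by (auto intro!: derivative_eq_intros has_deriv_u has_deriv_v simp: ac_simps)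
    moreover have "(\<Sum>i<r. du i k s * u i l s + u i k s * du i l s)
        = (\<Sum>j<m. dv j k s * v j l s + v j k s * dv j l s)"
      using sum_du_mult_u[of k s l] sum_du_mult_u[of l s k]
      by (simp add: sum.distrib mult.commute add.commute)
    ultimately show ?thesis by simp
  qed
  then have "P t = P 0" using DERIV_zero_imp_constant_nonneg t by blast
  then show "imbalance t $$ (k,l) = imbalance 0 $$ (k,l)"
    unfolding P_def using imbalance_index[OF t k l] imbalance_index[of 0 k l] k l by simp
qed (use imbalance_carrier[OF t] imbalance_carrier[of 0] in auto)

lemma neg_imbalance: "0 \<le> t \<Longrightarrow> - imbalance t = (V t)\<^sup>T * V t - (U1 t)\<^sup>T * U1 t"
  unfolding imbalance_def using U1_carrier_nonneg V_carrier_nonneg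
  by (intro eq_matI) fastforce+

lemma rate_nonneg: "0 \<le> rate"
  unfolding rate_def pos_part_def by simp

lemma lam_Sx_le: "i < r \<Longrightarrow> lam Sx r \<le> Sx $$ (i,i)"
  using lam_diagonal_pos(2)[OF Sx Sx_diag Sx_pos] by simp

lemma dissipation_V_lower:
  assumes t: "0 \<le> t"
  shows "(if h < r then 0 else pos_part (lam (imbalance 0) r)) * (\<Sum>j<m. \<Sum>i<r. (\<sigma> i * e i j t)\<^sup>2)
       \<le> (\<Sum>j<m. \<Sum>k<h. (dv j k t)\<^sup>2)"
proof (cases "h < r \<or> lam (imbalance 0) r \<le> 0")
  case True
  then show ?thesis by (auto simp: pos_part_def intro!: sum_nonneg)
next
  case False
  then have pos: "0 < lam ((U1 t)\<^sup>T * U1 t - (V t)\<^sup>T * V t) r"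
    using imbalance_const[OF t] unfolding imbalance_def by simp
  have "lam (imbalance 0) r * (\<Sum>i<r. (\<sigma> i * e i j t)\<^sup>2) \<le> (\<Sum>k<h. (dv j k t)\<^sup>2)" for j
    using lam_gram_diff_lower_bound_sum[OF U1_carrier_nonneg[OF t] V_carrier_nonneg[OF t] pos,
        of "\<lambda>i. \<sigma> i * e i j t"] imbalance_const[OF t]
    unfolding imbalance_def dv_def u_def by (simp add: mult_ac)
  then show ?thesis
    using False unfolding sum_distrib_left pos_part_def by (auto intro!: sum_mono)
qed

lemma dissipation_U_lower:
  assumes t: "0 \<le> t"
  shows "(if h < m then 0 else pos_part (lam (- imbalance 0) m)) * (\<Sum>i<r. \<Sum>j<m. (\<sigma> i * e i j t)\<^sup>2)
       \<le> (\<Sum>i<r. \<Sum>k<h. (du i k t)\<^sup>2)"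
proof (cases "h < m \<or> lam (- imbalance 0) m \<le> 0")
  case True
  then show ?thesis by (auto simp: pos_part_def intro!: sum_nonneg)
next
  case False
  have Lam: "- imbalance 0 = (V t)\<^sup>T * V t - (U1 t)\<^sup>T * U1 t"
    using neg_imbalance[OF t] imbalance_const[OF t] by simp
  then have pos: "0 < lam ((V t)\<^sup>T * V t - (U1 t)\<^sup>T * U1 t) m" using False by simp
  have "lam (- imbalance 0) m * (\<Sum>j<m. (\<sigma> i * e i j t)\<^sup>2) \<le> (\<Sum>k<h. (du i k t)\<^sup>2)" for i
    using lam_gram_diff_lower_bound_sum[OF V_carrier_nonneg[OF t] U1_carrier_nonneg[OF t] pos,
        of "\<lambda>j. \<sigma> i * e i j t"]
    unfolding Lam du_def v_def by (simp add: sum_distrib_left mult_ac)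
  then show ?thesis
    using False unfolding sum_distrib_left pos_part_def by (auto intro!: sum_mono)
qed

lemma gap_weighted_lower: "lam Sx r * gap t \<le> (\<Sum>i<r. \<Sum>j<m. (\<sigma> i * e i j t)\<^sup>2)"
proof -
  have "lam Sx r * gap t = (\<Sum>i<r. \<Sum>j<m. lam Sx r * (e i j t)\<^sup>2)"
    unfolding gap_def by (simp add: sum_distrib_left)
  also have "\<dots> \<le> (\<Sum>i<r. \<Sum>j<m. (\<sigma> i * e i j t)\<^sup>2)"
  proof (intro sum_mono)
    fix i j assume i: "i \<in> {..<r}"
    have "(\<sigma> i * e i j t)\<^sup>2 = Sx $$ (i,i) * (e i j t)\<^sup>2"
      unfolding \<sigma>_def using Sx_pos i by (simp add: power_mult_distrib less_imp_le)
    then show "lam Sx r * (e i j t)\<^sup>2 \<le> (\<sigma> i * e i j t)\<^sup>2"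
      using lam_Sx_le i by (simp add: mult_right_mono)
  qed
  finally show ?thesis .
qed

lemma dissipation_lower_bound:
  assumes t: "0 \<le> t"
  shows "lam Sx r * rate * gap t \<le> dissipation t"
proof -
  define G where "G = (\<Sum>i<r. \<Sum>j<m. (\<sigma> i * e i j t)\<^sup>2)"
  have "lam Sx r * rate * gap t \<le> rate * G"
    using mult_left_mono[OF gap_weighted_lower rate_nonneg] unfolding G_def by (simp add: mult_ac)
  also have "\<dots> = (if h < r then 0 else pos_part (lam (imbalance 0) r)) * (\<Sum>j<m. \<Sum>i<r. (\<sigma> i * e i j t)\<^sup>2)
      + (if h < m then 0 else pos_part (lam (- imbalance 0) m)) * G"
    unfolding rate_def G_def by (subst sum.swap) (simp add: distrib_right)
  also have "\<dots> \<le> dissipation t"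
    unfolding dissipation_def G_def using dissipation_V_lower[OF t] dissipation_U_lower[OF t] by simp
  finally show ?thesis .
qed

lemma gap_decay:
  assumes t: "0 \<le> t"
  shows "gap t \<le> exp (- 2 * lam Sx r * rate * t) * gap 0"
proof -
  have "gap t \<le> exp (- (2 * lam Sx r * rate) * t) * gap 0"
  proof (rule differential_inequality_exp_decay[OF has_deriv_gap _ t])
    show "- 2 * dissipation s \<le> - (2 * lam Sx r * rate) * gap s" if "0 \<le> s" for s
      using dissipation_lower_bound[OF that] by simp
  qed
  then show ?thesis by simp
qed

lemma rate_eq_if_wide:
  assumes "m + r \<le> h"
  shows "rate = lam (imbalance 0) r + lam (- imbalance 0) m"
proof -
  have "0 \<le> lam (imbalance 0) r"
    unfolding imbalance_def
    by (rule lam_gram_diff_nonneg[OF U1_carrier_nonneg V_carrier_nonneg]) (use assms in auto)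
  moreover have "0 \<le> lam (- imbalance 0) m"
    unfolding neg_imbalance[of 0, simplified]
    by (rule lam_gram_diff_nonneg[OF V_carrier_nonneg U1_carrier_nonneg]) (use assms in auto)
  ultimately show ?thesis unfolding rate_def pos_part_def using assms by auto
qed

definition param_norm :: "real \<Rightarrow> real" where
  "param_norm t = (\<Sum>i<r. \<Sum>k<h. (u i k t)\<^sup>2) + (\<Sum>j<m. \<Sum>k<h. (v j k t)\<^sup>2)"

definition speed_const :: real where "speed_const = (1 + real m) * (\<Sum>i<r. \<sigma> i)"

lemma param_norm_nonneg: "0 \<le> param_norm t"
  unfolding param_norm_def by (intro add_nonneg_nonneg sum_nonneg) auto

lemma sum_\<sigma>_nonneg: "0 \<le> (\<Sum>i<r. \<sigma> i)"
  by (intro sum_nonneg) (auto intro: \<sigma>_nonneg)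

lemma speed_const_nonneg: "0 \<le> speed_const"
  unfolding speed_const_def using sum_\<sigma>_nonneg by simp

lemma abs_u_le: "i < r \<Longrightarrow> k < h \<Longrightarrow> \<bar>u i k t\<bar> \<le> sqrt (param_norm t)"
proof (rule abs_le_sqrt_double_sum_squares)
  have "0 \<le> (\<Sum>j<m. \<Sum>k<h. (v j k t)\<^sup>2)" by (intro sum_nonneg) auto
  then show "(\<Sum>i<r. \<Sum>k<h. (u i k t)\<^sup>2) \<le> param_norm t" unfolding param_norm_def by simp
qed

lemma abs_v_le: "j < m \<Longrightarrow> k < h \<Longrightarrow> \<bar>v j k t\<bar> \<le> sqrt (param_norm t)"
proof (rule abs_le_sqrt_double_sum_squares)
  have "0 \<le> (\<Sum>i<r. \<Sum>k<h. (u i k t)\<^sup>2)" by (intro sum_nonneg) auto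
  then show "(\<Sum>j<m. \<Sum>k<h. (v j k t)\<^sup>2) \<le> param_norm t" unfolding param_norm_def by simp
qed

lemma abs_e_le: "i < r \<Longrightarrow> j < m \<Longrightarrow> \<bar>e i j t\<bar> \<le> sqrt (gap t)"
  by (rule abs_le_sqrt_double_sum_squares) (auto simp: gap_def)

lemma abs_du_le:
  assumes i: "i < r" and k: "k < h"
  shows "\<bar>du i k t\<bar> \<le> speed_const * sqrt (gap t) * sqrt (param_norm t)"
proof -
  have "\<bar>\<Sum>j<m. e i j t * v j k t\<bar> \<le> (\<Sum>j<m. sqrt (gap t) * sqrt (param_norm t))"
  proof (rule order_trans[OF sum_abs sum_mono])
    fix j assume "j \<in> {..<m}"
    then show "\<bar>e i j t * v j k t\<bar> \<le> sqrt (gap t) * sqrt (param_norm t)"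
      unfolding abs_mult by (intro mult_mono abs_e_le[OF i] abs_v_le[OF _ k]) (auto simp: gap_nonneg)
  qed
  then have "\<bar>du i k t\<bar> \<le> \<sigma> i * (real m * (sqrt (gap t) * sqrt (param_norm t)))"
    unfolding du_def using \<sigma>_nonneg[OF i] by (simp add: abs_mult mult_left_mono)
  also have "\<dots> \<le> speed_const * (sqrt (gap t) * sqrt (param_norm t))"
  proof -
    have "\<sigma> i * real m \<le> (\<Sum>i<r. \<sigma> i) * (1 + real m)"
      using member_le_sum[of i "{..<r}" \<sigma>] \<sigma>_nonneg i
      by (intro mult_mono) (auto simp: sum_\<sigma>_nonneg)
    from mult_right_mono[OF this, of "sqrt (gap t) * sqrt (param_norm t)"]
    show ?thesis unfolding speed_const_def by (simp add: gap_nonneg param_norm_nonneg mult_ac)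
  qed
  finally show ?thesis by (simp add: mult.assoc)
qed

lemma abs_dv_le:
  assumes j: "j < m" and k: "k < h"
  shows "\<bar>dv j k t\<bar> \<le> speed_const * sqrt (gap t) * sqrt (param_norm t)"
proof -
  have "\<bar>dv j k t\<bar> \<le> (\<Sum>i<r. \<sigma> i * (sqrt (gap t) * sqrt (param_norm t)))"
    unfolding dv_def
  proof (rule order_trans[OF sum_abs sum_mono])
    fix i assume i: "i \<in> {..<r}"
    have "\<bar>e i j t\<bar> * \<bar>u i k t\<bar> \<le> sqrt (gap t) * sqrt (param_norm t)"
      using i by (intro mult_mono abs_e_le[OF _ j] abs_u_le[OF _ k]) (auto simp: gap_nonneg)
    then show "\<bar>e i j t * \<sigma> i * u i k t\<bar> \<le> \<sigma> i * (sqrt (gap t) * sqrt (param_norm t))"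
      using \<sigma>_nonneg[of i] i unfolding abs_mult by (simp add: mult_left_mono mult_ac)
  qed
  also have "\<dots> \<le> speed_const * (sqrt (gap t) * sqrt (param_norm t))"
    unfolding speed_const_def sum_distrib_right[symmetric]
    using sum_\<sigma>_nonneg gap_nonneg[of t] param_norm_nonneg[of t]
    by (intro mult_right_mono) (auto simp: distrib_right)
  finally show ?thesis by (simp add: mult.assoc)
qed

lemma has_deriv_param_norm:
  assumes t: "0 \<le> t"
  shows "(param_norm has_real_derivative
           (\<Sum>i<r. \<Sum>k<h. 2 * u i k t * du i k t) + (\<Sum>j<m. \<Sum>k<h. 2 * v j k t * dv j k t))
         (at t within {0..})"
  unfolding param_norm_def
proof (intro DERIV_add DERIV_sum)
  show "((\<lambda>t. (u i k t)\<^sup>2) has_real_derivative 2 * u i k t * du i k t) (at t within {0..})"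
    if "i \<in> {..<r}" "k \<in> {..<h}" for i k
    using DERIV_power[OF has_deriv_u, of i k t 2] that t by (simp add: mult_ac)
  show "((\<lambda>t. (v j k t)\<^sup>2) has_real_derivative 2 * v j k t * dv j k t) (at t within {0..})"
    if "j \<in> {..<m}" "k \<in> {..<h}" for j k
    using DERIV_power[OF has_deriv_v, of j k t 2] that t by (simp add: mult_ac)
qed

lemma param_norm_growth:
  "(\<Sum>i<r. \<Sum>k<h. 2 * u i k t * du i k t) + (\<Sum>j<m. \<Sum>k<h. 2 * v j k t * dv j k t)
     \<le> 2 * speed_const * (real r * real h + real m * real h) * sqrt (gap t) * param_norm t"
proof -
  define B where "B = 2 * speed_const * sqrt (gap t) * param_norm t"
  have each: "2 * a * b \<le> B" if "\<bar>a\<bar> \<le> sqrt (param_norm t)"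
    and "\<bar>b\<bar> \<le> speed_const * sqrt (gap t) * sqrt (param_norm t)" for a b
  proof -
    have "a * b \<le> \<bar>a\<bar> * \<bar>b\<bar>" by (simp add: abs_mult[symmetric])
    also have "\<dots> \<le> sqrt (param_norm t) * (speed_const * sqrt (gap t) * sqrt (param_norm t))"
      by (rule mult_mono) (use that in \<open>auto simp: param_norm_nonneg\<close>)
    also have "\<dots> = speed_const * sqrt (gap t) * (sqrt (param_norm t) * sqrt (param_norm t))"
      by (simp add: mult_ac)
    finally show ?thesis unfolding B_def by (simp add: param_norm_nonneg)
  qed
  have "(\<Sum>i<r. \<Sum>k<h. 2 * u i k t * du i k t) + (\<Sum>j<m. \<Sum>k<h. 2 * v j k t * dv j k t)
      \<le> (\<Sum>i<r. \<Sum>k<h. B) + (\<Sum>j<m. \<Sum>k<h. B)"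
    by (intro add_mono sum_mono each abs_u_le abs_du_le abs_v_le abs_dv_le) auto
  also have "\<dots> = 2 * speed_const * (real r * real h + real m * real h) * sqrt (gap t) * param_norm t"
    unfolding B_def by (simp add: algebra_simps)
  finally show ?thesis .
qed

lemma sqrt_gap_decay:
  assumes decay: "\<And>t. 0 \<le> t \<Longrightarrow> gap t \<le> exp (- 2 * \<kappa> * t) * gap 0" and t: "0 \<le> t"
  shows "sqrt (gap t) \<le> sqrt (gap 0) * exp (- \<kappa> * t)"
proof -
  have "exp (- 2 * \<kappa> * t) = exp (- \<kappa> * t) * exp (- \<kappa> * t)"
    unfolding exp_add[symmetric] by simp
  moreover have "(sqrt (gap 0) * exp (- \<kappa> * t))\<^sup>2 = gap 0 * (exp (- \<kappa> * t) * exp (- \<kappa> * t))"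
    unfolding power_mult_distrib using gap_nonneg[of 0] by (simp add: power2_eq_square)
  ultimately have "gap t \<le> (sqrt (gap 0) * exp (- \<kappa> * t))\<^sup>2"
    using decay[OF t] by (simp add: mult.commute)
  then have "sqrt (gap t) \<le> sqrt ((sqrt (gap 0) * exp (- \<kappa> * t))\<^sup>2)" by (rule real_sqrt_le_mono)
  then show ?thesis using gap_nonneg[of 0] by simp
qed

lemma param_norm_bounded:
  assumes \<kappa>: "0 < \<kappa>" and decay: "\<And>t. 0 \<le> t \<Longrightarrow> gap t \<le> exp (- 2 * \<kappa> * t) * gap 0"
  obtains Nmax where "\<And>t. 0 \<le> t \<Longrightarrow> param_norm t \<le> Nmax"
proof -
  define \<beta> where "\<beta> = 2 * speed_const * (real r * real h + real m * real h) * sqrt (gap 0)"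
  have "param_norm t \<le> exp (\<beta> / \<kappa>) * param_norm 0" if "0 \<le> t" for t
  proof (rule differential_inequality_bounded[OF has_deriv_param_norm _ param_norm_nonneg \<kappa> _ that])
    show "0 \<le> \<beta>" unfolding \<beta>_def by (intro mult_nonneg_nonneg) (simp_all add: speed_const_nonneg gap_nonneg)
    fix s :: real assume s: "0 \<le> s"
    have "2 * speed_const * (real r * real h + real m * real h) * sqrt (gap s) * param_norm s
        \<le> 2 * speed_const * (real r * real h + real m * real h) * (sqrt (gap 0) * exp (- \<kappa> * s))
          * param_norm s"
      using sqrt_gap_decay[OF decay s] speed_const_nonneg param_norm_nonneg[of s]
      by (intro mult_right_mono mult_left_mono) auto
    then show "(\<Sum>i<r. \<Sum>k<h. 2 * u i k s * du i k s) + (\<Sum>j<m. \<Sum>k<h. 2 * v j k s * dv j k s)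
        \<le> \<beta> * exp (- \<kappa> * s) * param_norm s"
      using param_norm_growth[of s] unfolding \<beta>_def by (simp add: mult_ac)
  qed
  then show ?thesis by (rule that)
qed

text \<open>With exponentially decaying error and bounded parameters, the speed of every entry
  decays exponentially, so every entry converges.\<close>
lemma entries_converge:
  assumes \<kappa>: "0 < \<kappa>" and decay: "\<And>t. 0 \<le> t \<Longrightarrow> gap t \<le> exp (- 2 * \<kappa> * t) * gap 0"
  shows "i < r \<Longrightarrow> k < h \<Longrightarrow> \<exists>l. ((\<lambda>t. u i k t) \<longlongrightarrow> l) at_top"
    and "j < m \<Longrightarrow> k < h \<Longrightarrow> \<exists>l. ((\<lambda>t. v j k t) \<longlongrightarrow> l) at_top"
proof -
  obtain Nmax where N: "\<And>t. 0 \<le> t \<Longrightarrow> param_norm t \<le> Nmax"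
    using param_norm_bounded[OF \<kappa> decay] by blast
  define B where "B = speed_const * sqrt (gap 0) * sqrt Nmax"
  have speed: "speed_const * sqrt (gap t) * sqrt (param_norm t) \<le> B * exp (- \<kappa> * t)"
    if "0 \<le> t" for t
  proof -
    have "speed_const * sqrt (gap t) * sqrt (param_norm t)
        \<le> speed_const * (sqrt (gap 0) * exp (- \<kappa> * t)) * sqrt Nmax"
      using sqrt_gap_decay[OF decay that] N[OF that] speed_const_nonneg
      by (intro mult_mono mult_left_mono) (auto simp: gap_nonneg param_norm_nonneg)
    then show ?thesis unfolding B_def by (simp add: mult_ac)
  qed
  show "\<exists>l. ((\<lambda>t. u i k t) \<longlongrightarrow> l) at_top" if "i < r" "k < h"
    using exp_bounded_derivative_imp_convergent[OF has_deriv_u[OF that] _ \<kappa>, of B]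
      abs_du_le[OF that] speed by (meson order_trans)
  show "\<exists>l. ((\<lambda>t. v j k t) \<longlongrightarrow> l) at_top" if "j < m" "k < h"
    using exp_bounded_derivative_imp_convergent[OF has_deriv_v[OF that] _ \<kappa>, of B]
      abs_dv_le[OF that] speed by (meson order_trans)
qed

lemma e_tendsto_0:
  assumes \<kappa>: "0 < \<kappa>" and decay: "\<And>t. 0 \<le> t \<Longrightarrow> gap t \<le> exp (- 2 * \<kappa> * t) * gap 0"
    and "i < r" "j < m"
  shows "((\<lambda>t. e i j t) \<longlongrightarrow> 0) at_top"
proof -
  define b where "b t = sqrt (gap 0) * exp (- \<kappa> * t)" for t
  have b: "(b \<longlongrightarrow> 0) at_top"
    unfolding b_def using tendsto_mult_right_zero[OF exp_neg_tendsto_0[OF \<kappa>]] by simp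
  have "\<bar>e i j t\<bar> \<le> b t" if "0 \<le> t" for t
    unfolding b_def using abs_e_le[OF assms(3,4)] sqrt_gap_decay[OF decay that] by (rule order_trans)
  then have "- b t \<le> e i j t \<and> e i j t \<le> b t" if "0 \<le> t" for t
    using that by (metis abs_le_D1 abs_le_D2 minus_le_iff)
  then have "\<forall>\<^sub>F t in at_top. - b t \<le> e i j t \<and> e i j t \<le> b t"
    by (rule eventually_at_top_linorderI)
  then have "\<forall>\<^sub>F t in at_top. - b t \<le> e i j t" and "\<forall>\<^sub>F t in at_top. e i j t \<le> b t"
    by (auto elim: eventually_mono)
  then show ?thesis by (rule tendsto_sandwich) (use tendsto_minus[OF b] b in simp_all)
qed

lemma gap_decays_exponentially:
  assumes "0 < rate"
  obtains \<kappa> where "0 < \<kappa>" and "\<And>t. 0 \<le> t \<Longrightarrow> gap t \<le> exp (- 2 * \<kappa> * t) * gap 0"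
proof (cases "r = 0")
  case True
  then have "gap t = 0" for t unfolding gap_def by simp
  then show ?thesis using that[of 1] by simp
next
  case False
  then have "0 < lam Sx r" using lam_diagonal_pos(1)[OF Sx Sx_diag Sx_pos] by simp
  then show ?thesis using that[of "lam Sx r * rate"] assms gap_decay by (simp add: mult.assoc)
qed

lemma converges_to_zero_error:
  assumes "0 < rate"
  shows "\<exists>Vinf U1inf. Vinf \<in> carrier_mat m h \<and> U1inf \<in> carrier_mat r h
           \<and> mat_tendsto_at_top V Vinf \<and> mat_tendsto_at_top U1 U1inf
           \<and> err W Y Sx Vinf U1inf = 0\<^sub>m r m"
proof -
  obtain \<kappa> where \<kappa>: "0 < \<kappa>" and decay: "\<And>t. 0 \<le> t \<Longrightarrow> gap t \<le> exp (- 2 * \<kappa> * t) * gap 0"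
    using gap_decays_exponentially[OF assms] by blast
  define ul where "ul i k = (SOME l. ((\<lambda>t. u i k t) \<longlongrightarrow> l) at_top)" for i k
  define vl where "vl j k = (SOME l. ((\<lambda>t. v j k t) \<longlongrightarrow> l) at_top)" for j k
  have ul: "((\<lambda>t. u i k t) \<longlongrightarrow> ul i k) at_top" if "i < r" "k < h" for i k
    unfolding ul_def using entries_converge(1)[OF \<kappa> decay that] by (rule someI_ex)
  have vl: "((\<lambda>t. v j k t) \<longlongrightarrow> vl j k) at_top" if "j < m" "k < h" for j k
    unfolding vl_def using entries_converge(2)[OF \<kappa> decay that] by (rule someI_ex)
  define Vinf where "Vinf = mat m h (\<lambda>(j,k). vl j k)"
  define U1inf where "U1inf = mat r h (\<lambda>(i,k). ul i k)"
  have Vinf: "Vinf \<in> carrier_mat m h" and U1inf: "U1inf \<in> carrier_mat r h"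
    unfolding Vinf_def U1inf_def by auto
  have "mat_tendsto_at_top V Vinf"
    unfolding mat_tendsto_at_top_def Vinf_def using vl unfolding v_def by auto
  moreover have "mat_tendsto_at_top U1 U1inf"
    unfolding mat_tendsto_at_top_def U1inf_def using ul unfolding u_def by auto
  moreover have "err W Y Sx Vinf U1inf = 0\<^sub>m r m"
  proof (rule eq_matI)
    fix i j assume "i < dim_row (0\<^sub>m r m :: real mat)" "j < dim_col (0\<^sub>m r m :: real mat)"
    then have i: "i < r" and j: "j < m" by auto
    have lim: "((\<lambda>t. e i j t) \<longlongrightarrow> (W\<^sup>T * Y) $$ (i,j) - \<sigma> i * (\<Sum>l<h. ul i l * vl j l)) at_top"
      unfolding e_def by (intro tendsto_intros ul vl) (use i j in auto)
    have "(W\<^sup>T * Y) $$ (i,j) - \<sigma> i * (\<Sum>l<h. ul i l * vl j l) = 0"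
      by (rule tendsto_unique[OF _ lim e_tendsto_0[OF \<kappa> decay i j]]) simp
    then show "err W Y Sx Vinf U1inf $$ (i,j) = 0\<^sub>m r m $$ (i,j)"
      using err_index[OF W Y Sx Vinf U1inf i j] i j
      unfolding \<sigma>_def Vinf_def U1inf_def by simp
  qed (use err_carrier[OF W Y Sx Vinf U1inf] in auto)
  ultimately show ?thesis using Vinf U1inf by blast
qed

end

theorem theorem1:
  fixes X Y W Sx Phi1 Phi2 U2 :: "real mat"
    and V U1 :: "real \<Rightarrow> real mat"
    and n D m h r :: nat
  assumes X: "X \<in> carrier_mat n D" and Y: "Y \<in> carrier_mat n m"
    and Dn: "D > n" and rn: "n \<ge> r" and rk: "r = vec_space.rank n X"
    and hpos: "h > 0" and hmin: "h \<ge> min m D"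
    and W: "W \<in> carrier_mat n r" and Wort: "W\<^sup>T * W = 1\<^sub>m r"
    and Sx: "Sx \<in> carrier_mat r r" and Sxdiag: "diagonal_mat Sx"
    and Sxpos: "\<forall>i<r. Sx $$ (i,i) > 0"
    and Phi1: "Phi1 \<in> carrier_mat D r" and Phi2: "Phi2 \<in> carrier_mat D (D - r)"
    and Phiort: "(append_cols Phi1 Phi2)\<^sup>T * append_cols Phi1 Phi2 = 1\<^sub>m D"
    and svd: "X = W * append_cols (diag_sqrt Sx) (0\<^sub>m r (D - r)) * (append_cols Phi1 Phi2)\<^sup>T"
    and U2: "U2 \<in> carrier_mat (D - r) h"
    and Vc: "\<forall>t\<ge>0. V t \<in> carrier_mat m h"
    and U1c: "\<forall>t\<ge>0. U1 t \<in> carrier_mat r h"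
    and odeV: "\<forall>t\<ge>0. mat_has_deriv V
                 ((err W Y Sx (V t) (U1 t))\<^sup>T * diag_sqrt Sx * U1 t) (at t within {0..})"
    and odeU1: "\<forall>t\<ge>0. mat_has_deriv U1
                 (diag_sqrt Sx * err W Y Sx (V t) (U1 t) * V t) (at t within {0..})"
  defines "L \<equiv> (\<lambda>t. frob_sq (Y - X * (Phi1 * U1 t + Phi2 * U2) * (V t)\<^sup>T) / 2)"
    and "Lstar \<equiv> frob_sq ((1\<^sub>m n - W * W\<^sup>T) * Y) / 2"
    and "c \<equiv> (if h < r then 0 else pos_part (lam ((U1 0)\<^sup>T * U1 0 - (V 0)\<^sup>T * V 0) r))
             + (if h < m then 0 else pos_part (lam (- ((U1 0)\<^sup>T * U1 0 - (V 0)\<^sup>T * V 0)) m))"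
  shows "(\<forall>t>0. L t - Lstar \<le> exp (- 2 * lam Sx r * c * t) * (L 0 - Lstar))
       \<and> (h \<ge> m + r \<longrightarrow> c = lam ((U1 0)\<^sup>T * U1 0 - (V 0)\<^sup>T * V 0) r
                          + lam (- ((U1 0)\<^sup>T * U1 0 - (V 0)\<^sup>T * V 0)) m)
       \<and> (c > 0 \<longrightarrow> (\<exists>Vinf U1inf. Vinf \<in> carrier_mat m h \<and> U1inf \<in> carrier_mat r h
              \<and> mat_tendsto_at_top V Vinf \<and> mat_tendsto_at_top U1 U1inf
              \<and> err W Y Sx Vinf U1inf = 0\<^sub>m r m))"
proof -
  interpret factored_gradient_flow W Y Sx V U1 n r m h
    using W Y Sx Sxdiag Sxpos Vc U1c odeV odeU1 by unfold_locales
  have c: "c = rate" unfolding c_def rate_def imbalance_def ..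
  have rD: "r \<le> D" using rn Dn by simp
  have gap: "L t - Lstar = gap t / 2" if "0 \<le> t" for t
    using loss_decomposition[OF Y rD W Wort Sx Phi1 Phi2 Phiort svd U2
        V_carrier_nonneg[OF that] U1_carrier_nonneg[OF that]] gap_eq_frob_sq_err[OF that]
    unfolding L_def Lstar_def by linarith
  have decay: "L t - Lstar \<le> exp (- 2 * lam Sx r * c * t) * (L 0 - Lstar)" if t: "0 < t" for t
  proof -
    have "L t - Lstar = gap t / 2" using gap t by simp
    also have "\<dots> \<le> exp (- 2 * lam Sx r * rate * t) * gap 0 / 2" using gap_decay t by simp
    also have "\<dots> = exp (- 2 * lam Sx r * rate * t) * (L 0 - Lstar)" using gap[of 0] by simp
    finally show ?thesis unfolding c .
  qed
  show ?thesis
    using decay rate_eq_if_wide[unfolded imbalance_def] converges_to_zero_error unfolding c by auto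
qed

end
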